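(* Let $n$ be a positive integer. Then the map $r\mapsto r\cdot e^{(n)}_{n,\mathbb{H}}$, for $r\in\mathrm{Sym}^n\mathbb{C}[e_1]$, is an isomorphism of $\mathbb{C}$-algebras $$\mathrm{Sym}^n\mathbb{C}[e_1]\xrightarrow{\ \sim\ }\mathrm{Sym}^n\mathbb{C}[e_1]\cdot e^{(n)}_{n,\mathbb{H}}.$$
   Context: $\mathbb{H}$ is the real quaternion algebra with basis $e_0=1,e_1,e_2,e_3$, $e_1^2=e_2^2=e_3^2=-1$, $e_1e_2=-e_2e_1=e_3$, $e_2e_3=-e_3e_2=e_1$, $e_3e_1=-e_1e_3=e_2$; $\mathbb{H}_\mathbb{C}=\mathbb{H}\otimes_\mathbb{R}\mathbb{C}$ and $\mathbb{C}[e_1]\subset\mathbb{H}_\mathbb{C}$ is the $\mathbb{C}$-span of $1,e_1$. $\mathbb{H}_\mathbb{C}^{\otimes n}$ is the tensor power over $\mathbb{C}$ with componentwise multiplication, $\mathfrak S_n$ acts by permuting factors, $x^\vee=\frac1{n!}\sum_\sigma\sigma(x)$, and $\mathrm{Sym}^n\mathbb{C}[e_1]\subset\mathrm{Sym}^n\mathbb{H}_\mathbb{C}$ are the subalgebras of fixed tensors. Let $\triangle_\mathbb{H}=\frac14\sum_{i=0}^3e_i\otimes e_i$, and for $n\ge2$, $\triangle^{(n)}_\mathbb{H}=(\triangle_\mathbb{H}\otimes1^{\otimes(n-2)})^\vee$ (central in $\mathrm{Sym}^n\mathbb{H}_\mathbb{C}$), $\beta^{(n)}_{m}=\frac{2(n-m)(2m+2)}{4n(n-1)}$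 for $\lceil n/2\rceil\le m\le n$, and $e^{(n)}_{n,\mathbb{H}}=\prod_{\lceil n/2\rceil\le m'\le n-1}\frac{\triangle^{(n)}_\mathbb{H}-\beta^{(n)}_{m'}1^{\otimes n}}{\beta^{(n)}_{n}-\beta^{(n)}_{m'}}$; for $n=1$, $e^{(1)}_{1,\mathbb{H}}=1$. $\mathrm{Sym}^n\mathbb{C}[e_1]\cdot e^{(n)}_{n,\mathbb{H}}=\{re^{(n)}_{n,\mathbb{H}}:r\in\mathrm{Sym}^n\mathbb{C}[e_1]\}$, an algebra with unit $e^{(n)}_{n,\mathbb{H}}$. *)

theory Defs
  imports "HOL-Combinatorics.Permutations" Complex_Main
begin

text \<open>Concrete model of the tensor power of the complexified quaternions.
  Basis of H: e_0 = 1, e_1, e_2, e_3 (indices 0..3).  A basis of the n-th tensor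
  power is given by words (lists) of length n over the letters 0..3; an element of
  the tensor power is its coefficient function on words (zero outside words n).\<close>

definition words :: "nat \<Rightarrow> nat list set" where
  "words n = {w. length w = n \<and> set w \<subseteq> {0..3}}"

definition tcarrier :: "nat \<Rightarrow> (nat list \<Rightarrow> complex) set" where
  "tcarrier n = {x. \<forall>w. w \<notin> words n \<longrightarrow> x w = 0}"

text \<open>Quaternion basis multiplication: e_a e_b = qsgn a b * e_(qidx a b).\<close>
definition qidx :: "nat \<Rightarrow> nat \<Rightarrow> nat" where
  "qidx a b = (if a = 0 then b else if b = 0 then a else if a = b then 0 else 6 - a - b)"

definition qsgn :: "nat \<Rightarrow> nat \<Rightarrow> complex" where
  "qsgn a b = (if a = 0 \<or> b = 0 then 1 else if a = b then -1
     else if (a, b) \<in> {(1,2),(2,3),(3,1)} then 1 else -1)"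

definition wsgn :: "nat list \<Rightarrow> nat list \<Rightarrow> complex" where
  "wsgn w v = prod_list (map2 qsgn w v)"

definition tmul :: "nat \<Rightarrow> (nat list \<Rightarrow> complex) \<Rightarrow> (nat list \<Rightarrow> complex) \<Rightarrow> (nat list \<Rightarrow> complex)" where
  "tmul n x y = (\<lambda>u. \<Sum>w\<in>words n. \<Sum>v\<in>words n.
      if map2 qidx w v = u then wsgn w v * x w * y v else 0)"

definition tadd :: "(nat list \<Rightarrow> complex) \<Rightarrow> (nat list \<Rightarrow> complex) \<Rightarrow> (nat list \<Rightarrow> complex)" where
  "tadd x y = (\<lambda>w. x w + y w)"

definition tscale :: "complex \<Rightarrow> (nat list \<Rightarrow> complex) \<Rightarrow> (nat list \<Rightarrow> complex)" where
  "tscale c x = (\<lambda>w. c * x w)"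

definition tone :: "nat \<Rightarrow> nat list \<Rightarrow> complex" where
  "tone n = (\<lambda>w. if w = replicate n 0 then 1 else 0)"

definition wperm :: "nat \<Rightarrow> (nat \<Rightarrow> nat) \<Rightarrow> nat list \<Rightarrow> nat list" where
  "wperm n \<sigma> w = map (\<lambda>i. w ! \<sigma> i) [0..<n]"

definition tsym :: "nat \<Rightarrow> (nat list \<Rightarrow> complex) \<Rightarrow> (nat list \<Rightarrow> complex)" where
  "tsym n x = (\<lambda>w. if w \<in> words n then
      (1 / of_nat (fact n)) * (\<Sum>\<sigma>\<in>{\<sigma>. \<sigma> permutes {..<n}}. x (wperm n \<sigma> w)) else 0)"

definition SymC :: "nat \<Rightarrow> (nat list \<Rightarrow> complex) set" where
  "SymC n = {x \<in> tcarrier n.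
      (\<forall>\<sigma>. \<sigma> permutes {..<n} \<longrightarrow> (\<forall>w\<in>words n. x (wperm n \<sigma> w) = x w)) \<and>
      (\<forall>w. x w \<noteq> 0 \<longrightarrow> set w \<subseteq> {0,1})}"

text \<open>\<triangle>_H \<otimes> 1^{\<otimes>(n-2)}, with \<triangle>_H = 1/4 \<Sum>_i e_i \<otimes> e_i.\<close>
definition deltaH0 :: "nat \<Rightarrow> nat list \<Rightarrow> complex" where
  "deltaH0 n = (\<lambda>w. if (\<exists>i<4. w = [i, i] @ replicate (n - 2) 0) then 1/4 else 0)"

definition deltaH :: "nat \<Rightarrow> nat list \<Rightarrow> complex" where
  "deltaH n = tsym n (deltaH0 n)"

definition beta :: "nat \<Rightarrow> nat \<Rightarrow> complex" where
  "beta n m = of_real ((2 * (real n - real m) * (2 * real m + 2)) / (4 * real n * (real n - 1)))"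

text \<open>e^{(n)}_{n,H}; the index range \<lceil>n/2\<rceil> \<le> m' \<le> n-1 is [(n+1) div 2 ..< n].\<close>
definition eH :: "nat \<Rightarrow> nat list \<Rightarrow> complex" where
  "eH n = (if n = 1 then tone n else
     foldr (\<lambda>m acc. tmul n
        (tscale (1 / (beta n n - beta n m)) (tadd (deltaH n) (tscale (- beta n m) (tone n)))) acc)
      [(n + 1) div 2..<n] (tone n))"

end

theory Submission
  imports Defs
begin

text \<open>Identifying \<open>\<bbbH>\<^sub>\<complex>\<close> with \<open>M\<^sub>2(\<complex>)\<close>, the tensor power acts faithfully on \<open>(\<complex>\<^sup>2)\<^sup>\<otimes>\<^sup>n\<close>,
  the functions on binary words of length \<open>n\<close>. There \<open>Sym\<^sup>n \<complex>[e\<^sub>1]\<close> acts by diagonal matrices whose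
  entry at a word only depends on its weight (number of ones), and \<open>\<triangle>\<close> acts as
  \<open>1/2 - 1/(2n(n-1)) \<Sum>\<^sub>i\<^sub>\<noteq>\<^sub>j P\<^sub>i\<^sub>j\<close>, where \<open>P\<^sub>i\<^sub>j\<close> swaps two letters. Writing this through the
  \<open>sl\<^sub>2\<close> raising and lowering operators shows that on vectors of weight \<open>k\<close> it is annihilated
  by \<open>\<Prod>(X - \<beta>\<^sub>m)\<close> over \<open>n - min k (n-k) \<le> m \<le> n\<close>. Hence \<open>e\<close> is the spectral projection of \<open>\<triangle>\<close>
  for the eigenvalue \<open>\<beta>\<^sub>n = 0\<close>: an idempotent commuting with the diagonal action of \<open>Sym\<^sup>n \<complex>[e\<^sub>1]\<close>,
  which makes \<open>r \<mapsto> r e\<close> multiplicative. For injectivity, the sum of the basis vectors of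
  weight \<open>k\<close> is killed by \<open>\<triangle>\<close>, hence fixed by \<open>e\<close>, so \<open>r e\<close> still determines every diagonal
  entry of \<open>r\<close>.\<close>

section \<open>Polynomials in a linear operator\<close>

definition lin_op :: "(('a \<Rightarrow> complex) \<Rightarrow> 'a \<Rightarrow> complex) \<Rightarrow> bool" where
  "lin_op T \<longleftrightarrow> (\<forall>x y. T (\<lambda>u. x u + y u) = (\<lambda>u. T x u + T y u)) \<and> (\<forall>c x. T (\<lambda>u. c * x u) = (\<lambda>u. c * T x u))"

lemma lin_op_add: "lin_op T \<Longrightarrow> T (\<lambda>u. x u + y u) = (\<lambda>u. T x u + T y u)"
  by (simp add: lin_op_def)

lemma lin_op_scale: "lin_op T \<Longrightarrow> T (\<lambda>u. c * x u) = (\<lambda>u. c * T x u)"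
  by (simp add: lin_op_def)

lemma lin_op_zero: "lin_op T \<Longrightarrow> T (\<lambda>u. 0) = (\<lambda>u. 0)"
  using lin_op_scale[of T 0 "\<lambda>u. 0"] by simp

lemma lin_op_diff: "lin_op T \<Longrightarrow> T (\<lambda>u. x u - c * y u) = (\<lambda>u. T x u - c * T y u)"
  using lin_op_add[of T x "\<lambda>u. (- c) * y u"] lin_op_scale[of T "- c" y] by simp

lemma lin_op_sum:
  assumes "finite A" and T: "lin_op T"
  shows "T (\<lambda>u. \<Sum>k\<in>A. f k u) = (\<lambda>u. \<Sum>k\<in>A. T (f k) u)"
  using assms(1)
proof (induction A rule: finite_induct)
  case empty then show ?case using lin_op_zero[OF T] by simp
next
  case (insert a A)
  then show ?case using lin_op_add[OF T, of "f a" "\<lambda>u. \<Sum>k\<in>A. f k u"] by simp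
qed

lemma lin_op_comp: "lin_op S \<Longrightarrow> lin_op T \<Longrightarrow> lin_op (\<lambda>x. S (T x))"
  by (simp add: lin_op_def)

definition shifted :: "(('a \<Rightarrow> complex) \<Rightarrow> 'a \<Rightarrow> complex) \<Rightarrow> complex \<Rightarrow> ('a \<Rightarrow> complex) \<Rightarrow> 'a \<Rightarrow> complex" where
  "shifted T c x = (\<lambda>u. T x u - c * x u)"

definition shifted_prod :: "(('a \<Rightarrow> complex) \<Rightarrow> 'a \<Rightarrow> complex) \<Rightarrow> complex list \<Rightarrow> ('a \<Rightarrow> complex) \<Rightarrow> 'a \<Rightarrow> complex" where
  "shifted_prod T cs x = foldr (shifted T) cs x"

lemma shifted_prod_Nil [simp]: "shifted_prod T [] x = x"
  by (simp add: shifted_prod_def)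

lemma shifted_prod_Cons [simp]: "shifted_prod T (c # cs) x = shifted T c (shifted_prod T cs x)"
  by (simp add: shifted_prod_def)

lemma shifted_prod_append: "shifted_prod T (xs @ ys) x = shifted_prod T xs (shifted_prod T ys x)"
  by (simp add: shifted_prod_def)

lemma lin_op_shifted: "lin_op T \<Longrightarrow> lin_op (shifted T c)"
  unfolding lin_op_def shifted_def by (auto simp: fun_eq_iff algebra_simps)

lemma lin_op_shifted_prod: "lin_op T \<Longrightarrow> lin_op (shifted_prod T cs)"
proof (induction cs)
  case Nil then show ?case by (simp add: lin_op_def)
next
  case (Cons c cs)
  then show ?case using lin_op_comp[OF lin_op_shifted Cons.IH] by simp
qed

lemma shifted_prod_zero: "lin_op T \<Longrightarrow> shifted_prod T cs (\<lambda>u. 0) = (\<lambda>u. 0)"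
  by (rule lin_op_zero[OF lin_op_shifted_prod])

lemma shifted_prod_commute_lin_op:
  assumes "lin_op S" "\<And>x. S (T x) = T (S x)"
  shows "S (shifted_prod T cs x) = shifted_prod T cs (S x)"
proof (induction cs)
  case Nil then show ?case by simp
next
  case (Cons c cs)
  then show ?case using lin_op_diff[OF assms(1), of "T (shifted_prod T cs x)" c "shifted_prod T cs x"]
    by (simp add: shifted_def assms(2))
qed

lemma shifted_prod_commute: "lin_op T \<Longrightarrow> T (shifted_prod T cs x) = shifted_prod T cs (T x)"
  by (rule shifted_prod_commute_lin_op) simp_all

lemma shifted_prod_shifted: "lin_op T \<Longrightarrow> shifted T a (shifted_prod T cs x) = shifted_prod T cs (shifted T a x)"
  using lin_op_diff[OF lin_op_shifted_prod, of T cs "T x" a x] shifted_prod_commute[of T cs x]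
  by (simp add: shifted_def)

lemma shifted_prod_perm: "lin_op T \<Longrightarrow> mset xs = mset ys \<Longrightarrow> shifted_prod T xs x = shifted_prod T ys x"
proof (induction xs arbitrary: ys x)
  case Nil then show ?case by simp
next
  case (Cons a xs)
  have "a \<in> set ys" using Cons.prems(2) by (metis list.set_intros(1) set_mset_mset)
  then obtain ys1 ys2 where ys: "ys = ys1 @ a # ys2" by (meson split_list)
  have m: "mset xs = mset (ys1 @ ys2)" using Cons.prems(2) ys by simp
  have "shifted_prod T (a # xs) x = shifted_prod T xs (shifted T a x)"
    using shifted_prod_shifted[OF Cons.prems(1)] by simp
  also have "\<dots> = shifted_prod T (ys1 @ ys2) (shifted T a x)" by (rule Cons.IH[OF Cons.prems(1) m])
  also have "\<dots> = shifted_prod T ys x"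
    using shifted_prod_shifted[OF Cons.prems(1)] by (simp add: ys shifted_prod_append)
  finally show ?case .
qed

lemma sum_delta_mult:
  fixes f :: "'a \<Rightarrow> 'b::semiring_1"
  assumes "finite S"
  shows "(\<Sum>w\<in>S. (if a = w then 1 else 0) * f w) = (if a \<in> S then f a else 0)"
proof -
  have "(\<Sum>w\<in>S. (if a = w then 1 else 0) * f w) = (\<Sum>w\<in>S. if a = w then f w else 0)"
    by (rule sum.cong) auto
  then show ?thesis using assms by simp
qed

lemma sum_offdiag_const:
  assumes "finite A" "a \<in> A"
  shows "(\<Sum>b\<in>A. if a = b then 0 else c) = of_nat (card A - 1) * (c::'b::semiring_1)"
proof -
  have "(\<Sum>b\<in>A. if a = b then 0 else c) = (\<Sum>b\<in>A - {a}. if a = b then 0 else c)"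
    using assms by (simp add: sum.remove[of A a])
  also have "\<dots> = (\<Sum>b\<in>A - {a}. c)" by (rule sum.cong) auto
  finally have "(\<Sum>b\<in>A. if a = b then 0 else c) = (\<Sum>b\<in>A - {a}. c)" .
  then show ?thesis using assms by simp
qed

definition bin_words :: "nat \<Rightarrow> nat list set" where
  "bin_words n = {w. length w = n \<and> set w \<subseteq> {0,1}}"

lemma words_0: "words 0 = {[]}"
  by (auto simp: words_def)

lemma bin_words_0: "bin_words 0 = {[]}"
  by (auto simp: bin_words_def)

lemma words_Suc: "words (Suc n) = (\<lambda>(a,w). a # w) ` ({0..3} \<times> words n)"
  by (auto simp: words_def image_iff length_Suc_conv)

lemma bin_words_Suc: "bin_words (Suc n) = (\<lambda>(a,w). a # w) ` ({0,1} \<times> bin_words n)"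
  by (auto simp: bin_words_def image_iff length_Suc_conv)

lemma finite_words [simp]: "finite (words n)"
  by (induction n) (auto simp: words_0 words_Suc)

lemma finite_bin_words [simp]: "finite (bin_words n)"
  by (induction n) (auto simp: bin_words_0 bin_words_Suc)

lemma sum_bin_words_Suc: "(\<Sum>w\<in>bin_words (Suc n). f w) = (\<Sum>w\<in>bin_words n. f (0 # w) + f (1 # w))"
proof -
  have "inj_on (\<lambda>(a,w). a # w) ({0,1::nat} \<times> bin_words n)" by (auto simp: inj_on_def)
  then have "(\<Sum>w\<in>bin_words (Suc n). f w) = (\<Sum>a\<in>{0,1}. \<Sum>w\<in>bin_words n. f (a # w))"
    unfolding bin_words_Suc by (simp add: sum.reindex sum.cartesian_product case_prod_beta')
  then show ?thesis by (simp add: sum.distrib)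
qed

lemma words_Cons: "a # w \<in> words (Suc n) \<longleftrightarrow> a \<le> 3 \<and> w \<in> words n"
  by (auto simp: words_def)

lemma words_SucE: "w \<in> words (Suc n) \<Longrightarrow> \<exists>a w'. w = a # w' \<and> a \<le> 3 \<and> w' \<in> words n"
  by (cases w) (auto simp: words_def)

lemma bin_words_SucE: "w \<in> bin_words (Suc n) \<Longrightarrow> \<exists>a w'. w = a # w' \<and> a \<le> 1 \<and> w' \<in> bin_words n"
  by (cases w) (auto simp: bin_words_def)

lemma bin_words_length: "u \<in> bin_words n \<Longrightarrow> length u = n"
  by (simp add: bin_words_def)

lemma bin_words_nth: "u \<in> bin_words n \<Longrightarrow> i < n \<Longrightarrow> u ! i = 0 \<or> u ! i = 1"
  by (auto simp: bin_words_def dest!: nth_mem)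

lemma replicate_0_words: "replicate n 0 \<in> words n"
  by (auto simp: words_def set_replicate_conv_if)

lemma qidx_le: "a \<le> 3 \<Longrightarrow> b \<le> 3 \<Longrightarrow> qidx a b \<le> 3"
  by (auto simp: qidx_def)

lemma map2_qidx_words: "w \<in> words n \<Longrightarrow> v \<in> words n \<Longrightarrow> map2 qidx w v \<in> words n"
proof (induction n arbitrary: w v)
  case 0 then show ?case by (simp add: words_0)
next
  case (Suc n)
  from words_SucE[OF Suc.prems(1)] words_SucE[OF Suc.prems(2)] Suc.IH show ?case
    by (auto simp: words_Cons qidx_le)
qed

section \<open>The action on binary words\<close>

text \<open>Entry \<open>(b, c)\<close> of the matrix of \<open>e\<^sub>a\<close> under \<open>\<bbbH>\<^sub>\<complex> \<cong> M\<^sub>2(\<complex>)\<close>, where \<open>e\<^sub>1, e\<^sub>2, e\<^sub>3\<close> are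
  sent to \<open>diag(i, -i)\<close>, \<open>(0 1; -1 0)\<close> and \<open>(0 i; i 0)\<close>.\<close>
definition qmat :: "nat \<Rightarrow> nat \<Rightarrow> nat \<Rightarrow> complex" where
  "qmat a b c = (if a = 0 then (if b = c then 1 else 0)
    else if a = 1 then (if b = c then (if b = 0 then \<i> else -\<i>) else 0)
    else if a = 2 then (if b = 0 \<and> c = 1 then 1 else if b = 1 \<and> c = 0 then -1 else 0)
    else (if b \<noteq> c then \<i> else 0))"

lemma nat_le_3_cases: "(a::nat) \<le> 3 \<Longrightarrow> a = 0 \<or> a = 1 \<or> a = 2 \<or> a = 3"
  by auto

lemma nat_le_1_cases: "(a::nat) \<le> 1 \<Longrightarrow> a = 0 \<or> a = 1"
  by auto

lemma qmat_mult:
  assumes "a \<le> 3" "a' \<le> 3" "c \<le> 1" "d \<le> 1"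
  shows "qmat a c 0 * qmat a' 0 d + qmat a c 1 * qmat a' 1 d = qsgn a a' * qmat (qidx a a') c d"
  using nat_le_3_cases[OF assms(1)] nat_le_3_cases[OF assms(2)] nat_le_1_cases[OF assms(3)] nat_le_1_cases[OF assms(4)]
  by (elim disjE; simp add: qmat_def qsgn_def qidx_def)

lemma qmat_orthogonal:
  assumes "a \<le> 3" "a' \<le> 3"
  shows "cnj (qmat a 0 0) * qmat a' 0 0 + cnj (qmat a 0 1) * qmat a' 0 1 + cnj (qmat a 1 0) * qmat a' 1 0
       + cnj (qmat a 1 1) * qmat a' 1 1 = (if a = a' then 2 else 0)"
  using nat_le_3_cases[OF assms(1)] nat_le_3_cases[OF assms(2)]
  by (elim disjE; simp add: qmat_def)

fun kron :: "nat list \<Rightarrow> nat list \<Rightarrow> nat list \<Rightarrow> complex" where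
  "kron (a # w) (b # u) (c # v) = qmat a b c * kron w u v"
| "kron _ _ _ = 1"

lemma kron_mult:
  assumes "w \<in> words n" "w' \<in> words n" "u \<in> bin_words n" "t \<in> bin_words n"
  shows "(\<Sum>v\<in>bin_words n. kron w u v * kron w' v t) = wsgn w w' * kron (map2 qidx w w') u t"
  using assms
proof (induction n arbitrary: w w' u t)
  case 0 then show ?case by (simp add: words_0 bin_words_0 wsgn_def)
next
  case (Suc n)
  obtain a w0 where w: "w = a # w0" "a \<le> 3" "w0 \<in> words n" using words_SucE[OF Suc.prems(1)] by blast
  obtain a' w0' where w': "w' = a' # w0'" "a' \<le> 3" "w0' \<in> words n" using words_SucE[OF Suc.prems(2)] by blast
  obtain c u0 where u: "u = c # u0" "c \<le> 1" "u0 \<in> bin_words n" using bin_words_SucE[OF Suc.prems(3)] by blast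
  obtain d t0 where t: "t = d # t0" "d \<le> 1" "t0 \<in> bin_words n" using bin_words_SucE[OF Suc.prems(4)] by blast
  have "(\<Sum>v\<in>bin_words (Suc n). kron w u v * kron w' v t)
      = (\<Sum>v\<in>bin_words n. (qmat a c 0 * qmat a' 0 d + qmat a c 1 * qmat a' 1 d) * (kron w0 u0 v * kron w0' v t0))"
    unfolding sum_bin_words_Suc w u w' t by (simp add: algebra_simps)
  also have "\<dots> = (qmat a c 0 * qmat a' 0 d + qmat a c 1 * qmat a' 1 d) * (\<Sum>v\<in>bin_words n. kron w0 u0 v * kron w0' v t0)"
    by (simp add: sum_distrib_left)
  also have "\<dots> = qsgn a a' * qmat (qidx a a') c d * (wsgn w0 w0' * kron (map2 qidx w0 w0') u0 t0)"
    using Suc.IH[OF w(3) w'(3) u(3) t(3)] qmat_mult[OF w(2) w'(2) u(2) t(2)] by simp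
  also have "\<dots> = wsgn w w' * kron (map2 qidx w w') u t"
    by (simp add: w w' u t wsgn_def)
  finally show ?case .
qed

lemma kron_orthogonal:
  assumes "w \<in> words n" "w' \<in> words n"
  shows "(\<Sum>u\<in>bin_words n. \<Sum>v\<in>bin_words n. cnj (kron w u v) * kron w' u v) = 2^n * (if w = w' then 1 else 0)"
  using assms
proof (induction n arbitrary: w w')
  case 0 then show ?case by (simp add: words_0 bin_words_0)
next
  case (Suc n)
  obtain a w0 where w: "w = a # w0" "a \<le> 3" "w0 \<in> words n" using words_SucE[OF Suc.prems(1)] by blast
  obtain a' w0' where w': "w' = a' # w0'" "a' \<le> 3" "w0' \<in> words n" using words_SucE[OF Suc.prems(2)] by blast
  let ?C = "cnj (qmat a 0 0) * qmat a' 0 0 + cnj (qmat a 0 1) * qmat a' 0 1 + cnj (qmat a 1 0) * qmat a' 1 0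
       + cnj (qmat a 1 1) * qmat a' 1 1"
  have "(\<Sum>u\<in>bin_words (Suc n). \<Sum>v\<in>bin_words (Suc n). cnj (kron w u v) * kron w' u v)
     = ?C * (\<Sum>u\<in>bin_words n. \<Sum>v\<in>bin_words n. cnj (kron w0 u v) * kron w0' u v)"
    unfolding sum_bin_words_Suc w w' by (simp add: sum.distrib[symmetric] algebra_simps sum_distrib_left)
  also have "\<dots> = 2^Suc n * (if w = w' then 1 else 0)"
    using Suc.IH[OF w(3) w'(3)] qmat_orthogonal[OF w(2) w'(2)] by (simp add: w w')
  finally show ?case .
qed

lemma kron_replicate_0: "length u = n \<Longrightarrow> length v = n \<Longrightarrow> kron (replicate n 0) u v = (if u = v then 1 else 0)"
proof (induction n arbitrary: u v)
  case 0 then show ?case by simp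
next
  case (Suc n)
  then obtain b u' c v' where "u = b # u'" "v = c # v'" "length u' = n" "length v' = n"
    by (metis length_Suc_conv)
  with Suc.IH show ?case by (simp add: qmat_def)
qed

definition rep_mat :: "nat \<Rightarrow> (nat list \<Rightarrow> complex) \<Rightarrow> nat list \<Rightarrow> nat list \<Rightarrow> complex" where
  "rep_mat n x u v = (\<Sum>w\<in>words n. x w * kron w u v)"

definition rep :: "nat \<Rightarrow> (nat list \<Rightarrow> complex) \<Rightarrow> (nat list \<Rightarrow> complex) \<Rightarrow> nat list \<Rightarrow> complex" where
  "rep n x z = (\<lambda>u. if u \<in> bin_words n then \<Sum>v\<in>bin_words n. rep_mat n x u v * z v else 0)"

definition bin_restrict :: "nat \<Rightarrow> (nat list \<Rightarrow> complex) \<Rightarrow> nat list \<Rightarrow> complex" where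
  "bin_restrict n z = (\<lambda>u. if u \<in> bin_words n then z u else 0)"

definition bin_supp :: "nat \<Rightarrow> (nat list \<Rightarrow> complex) \<Rightarrow> bool" where
  "bin_supp n z \<longleftrightarrow> (\<forall>u. u \<notin> bin_words n \<longrightarrow> z u = 0)"

lemma bin_supp_bin_restrict: "bin_supp n (bin_restrict n z)"
  by (simp add: bin_supp_def bin_restrict_def)

lemma bin_restrict_bin_supp: "bin_supp n z \<Longrightarrow> bin_restrict n z = z"
  by (auto simp: bin_supp_def bin_restrict_def fun_eq_iff)

lemma bin_supp_rep: "bin_supp n (rep n x z)"
  by (simp add: bin_supp_def rep_def)

lemma rep_mat_tmul:
  assumes "u \<in> bin_words n" "t \<in> bin_words n"
  shows "rep_mat n (tmul n x y) u t = (\<Sum>v\<in>bin_words n. rep_mat n x u v * rep_mat n y v t)"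
proof -
  have "rep_mat n (tmul n x y) u t = (\<Sum>z\<in>words n. \<Sum>w\<in>words n. \<Sum>w'\<in>words n.
      (if map2 qidx w w' = z then wsgn w w' * x w * y w' * kron z u t else 0))"
    unfolding rep_mat_def tmul_def sum_distrib_right by (intro sum.cong refl) auto
  also have "\<dots> = (\<Sum>w\<in>words n. \<Sum>w'\<in>words n. \<Sum>z\<in>words n.
      (if map2 qidx w w' = z then wsgn w w' * x w * y w' * kron z u t else 0))"
    by (rule trans[OF sum.swap], rule sum.cong[OF refl], rule sum.swap)
  also have "\<dots> = (\<Sum>w\<in>words n. \<Sum>w'\<in>words n. wsgn w w' * x w * y w' * kron (map2 qidx w w') u t)"
    by (intro sum.cong refl) (simp add: sum.delta' map2_qidx_words)
  also have "\<dots> = (\<Sum>w\<in>words n. \<Sum>w'\<in>words n. x w * y w' * (\<Sum>v\<in>bin_words n. kron w u v * kron w' v t))"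
    by (intro sum.cong refl) (simp add: kron_mult assms)
  also have "\<dots> = (\<Sum>w\<in>words n. \<Sum>w'\<in>words n. \<Sum>v\<in>bin_words n. x w * kron w u v * (y w' * kron w' v t))"
    by (intro sum.cong refl) (simp add: sum_distrib_left algebra_simps)
  also have "\<dots> = (\<Sum>v\<in>bin_words n. \<Sum>w\<in>words n. \<Sum>w'\<in>words n. x w * kron w u v * (y w' * kron w' v t))"
    by (rule trans[OF sum.cong[OF refl] sum.swap], rule sum.swap)
  also have "\<dots> = (\<Sum>v\<in>bin_words n. rep_mat n x u v * rep_mat n y v t)"
    unfolding rep_mat_def by (simp add: sum_product)
  finally show ?thesis .
qed

lemma rep_tmul: "rep n (tmul n x y) z = rep n x (rep n y z)"
proof (rule ext)
  fix u
  show "rep n (tmul n x y) z u = rep n x (rep n y z) u"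
  proof (cases "u \<in> bin_words n")
    case True
    have "rep n (tmul n x y) z u = (\<Sum>v\<in>bin_words n. \<Sum>t\<in>bin_words n. rep_mat n x u t * (rep_mat n y t v * z v))"
      using True by (simp add: rep_def rep_mat_tmul sum_distrib_right sum_distrib_left algebra_simps)
    also have "\<dots> = (\<Sum>t\<in>bin_words n. \<Sum>v\<in>bin_words n. rep_mat n x u t * (rep_mat n y t v * z v))"
      by (rule sum.swap)
    also have "\<dots> = rep n x (rep n y z) u"
      using True by (simp add: rep_def sum_distrib_left)
    finally show ?thesis .
  qed (simp add: rep_def)
qed

lemma rep_mat_inversion:
  assumes "x \<in> tcarrier n" "w \<in> words n"
  shows "(\<Sum>u\<in>bin_words n. \<Sum>v\<in>bin_words n. cnj (kron w u v) * rep_mat n x u v) = 2^n * x w"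
proof -
  have "(\<Sum>u\<in>bin_words n. \<Sum>v\<in>bin_words n. cnj (kron w u v) * rep_mat n x u v)
     = (\<Sum>u\<in>bin_words n. \<Sum>v\<in>bin_words n. \<Sum>w'\<in>words n. x w' * (cnj (kron w u v) * kron w' u v))"
    unfolding rep_mat_def by (simp add: sum_distrib_left algebra_simps)
  also have "\<dots> = (\<Sum>w'\<in>words n. \<Sum>u\<in>bin_words n. \<Sum>v\<in>bin_words n. x w' * (cnj (kron w u v) * kron w' u v))"
    by (rule trans[OF sum.cong[OF refl sum.swap] sum.swap])
  also have "\<dots> = (\<Sum>w'\<in>words n. x w' * (\<Sum>u\<in>bin_words n. \<Sum>v\<in>bin_words n. cnj (kron w u v) * kron w' u v))"
    by (simp add: sum_distrib_left)
  also have "\<dots> = (\<Sum>w'\<in>words n. (if w = w' then 1 else 0) * (2^n * x w'))"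
    by (intro sum.cong refl) (simp add: kron_orthogonal assms)
  also have "\<dots> = 2^n * x w"
    using assms(2) by (simp add: sum_delta_mult)
  finally show ?thesis .
qed

lemma rep_indicator:
  "u \<in> bin_words n \<Longrightarrow> v \<in> bin_words n \<Longrightarrow> rep n x (\<lambda>t. if v = t then 1 else 0) u = rep_mat n x u v"
  by (simp add: rep_def sum_delta_mult[of _ v "rep_mat n x u", unfolded mult.commute[of _ "rep_mat n x u _"]])

lemma rep_injective:
  assumes "x \<in> tcarrier n" "y \<in> tcarrier n" "\<And>z. rep n x z = rep n y z"
  shows "x = y"
proof (rule ext)
  fix w
  show "x w = y w"
  proof (cases "w \<in> words n")
    case True
    have "\<And>u v. u \<in> bin_words n \<Longrightarrow> v \<in> bin_words n \<Longrightarrow> rep_mat n x u v = rep_mat n y u v"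
      using rep_indicator assms(3) by metis
    then have "(2::complex)^n * x w = 2^n * y w"
      using rep_mat_inversion[OF assms(1) True] rep_mat_inversion[OF assms(2) True]
      by (metis (no_types, lifting) sum.cong)
    then show ?thesis by simp
  next
    case False then show ?thesis using assms(1,2) by (simp add: tcarrier_def)
  qed
qed

lemma rep_mat_tone:
  "u \<in> bin_words n \<Longrightarrow> v \<in> bin_words n \<Longrightarrow> rep_mat n (tone n) u v = (if u = v then 1 else 0)"
  unfolding rep_mat_def tone_def
  using sum_delta_mult[of "words n" "replicate n 0" "\<lambda>w. kron w u v"]
  by (simp add: replicate_0_words kron_replicate_0 bin_words_def eq_commute[of _ "replicate n 0"])

lemma rep_tone: "rep n (tone n) z = bin_restrict n z"
proof (rule ext)
  fix u
  have "u \<in> bin_words n \<Longrightarrow> (\<Sum>v\<in>bin_words n. rep_mat n (tone n) u v * z v) = z u"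
    using sum_delta_mult[of "bin_words n" u z] by (simp add: rep_mat_tone cong: sum.cong)
  then show "rep n (tone n) z u = bin_restrict n z u"
    by (simp add: rep_def bin_restrict_def)
qed

lemma rep_tadd: "rep n (tadd x y) z = (\<lambda>u. rep n x z u + rep n y z u)"
  by (rule ext) (simp add: rep_def rep_mat_def tadd_def sum.distrib algebra_simps)

lemma rep_tscale: "rep n (tscale c x) z = (\<lambda>u. c * rep n x z u)"
  by (rule ext) (simp add: rep_def rep_mat_def tscale_def sum_distrib_left algebra_simps)

lemma tone_in_tcarrier: "tone n \<in> tcarrier n"
  by (auto simp: tcarrier_def tone_def replicate_0_words)

lemma tmul_in_tcarrier: "tmul n x y \<in> tcarrier n"
  unfolding tcarrier_def tmul_def using map2_qidx_words by (auto intro!: sum.neutral)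

lemma tmul_assoc: "tmul n (tmul n x y) z = tmul n x (tmul n y z)"
  by (rule rep_injective[OF tmul_in_tcarrier tmul_in_tcarrier]) (simp add: rep_tmul)

lemma tmul_tone_left: "x \<in> tcarrier n \<Longrightarrow> tmul n (tone n) x = x"
  by (rule rep_injective[OF tmul_in_tcarrier]) (simp_all add: rep_tmul rep_tone bin_restrict_bin_supp[OF bin_supp_rep])

lemma tmul_tadd_left: "tmul n (tadd x y) z = tadd (tmul n x z) (tmul n y z)"
proof (rule ext)
  fix u
  have "tmul n (tadd x y) z u = (\<Sum>w\<in>words n. \<Sum>v\<in>words n.
      (if map2 qidx w v = u then wsgn w v * x w * z v else 0) + (if map2 qidx w v = u then wsgn w v * y w * z v else 0))"
    unfolding tmul_def tadd_def by (intro sum.cong refl) (simp add: algebra_simps)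
  then show "tmul n (tadd x y) z u = tadd (tmul n x z) (tmul n y z) u"
    by (simp add: tmul_def tadd_def sum.distrib)
qed

lemma tmul_tscale_left: "tmul n (tscale c x) z = tscale c (tmul n x z)"
proof (rule ext)
  fix u
  have "tmul n (tscale c x) z u = (\<Sum>w\<in>words n. \<Sum>v\<in>words n.
      c * (if map2 qidx w v = u then wsgn w v * x w * z v else 0))"
    unfolding tmul_def tscale_def by (intro sum.cong refl) (simp add: algebra_simps)
  then show "tmul n (tscale c x) z u = tscale c (tmul n x z) u"
    by (simp add: tmul_def tscale_def sum_distrib_left)
qed

section \<open>Permutations of positions\<close>

lemma permutes_pair_exists:
  assumes "2 \<le> (n::nat)" "a < n" "b < n" "a \<noteq> b"
  shows "\<exists>\<tau>. \<tau> permutes {..<n} \<and> \<tau> 0 = a \<and> \<tau> 1 = b"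
proof (cases "b = 0")
  case True
  let ?\<tau> = "Transposition.transpose 1 a \<circ> Transposition.transpose 0 1"
  have "?\<tau> permutes {..<n}" using assms by (intro permutes_compose permutes_swap_id) auto
  moreover have "?\<tau> 0 = a" "?\<tau> 1 = b" using assms True by (auto simp: transpose_def)
  ultimately show ?thesis by blast
next
  case False
  let ?\<tau> = "Transposition.transpose a 0 \<circ> Transposition.transpose b 1"
  have "?\<tau> permutes {..<n}" using assms by (intro permutes_compose permutes_swap_id) auto
  moreover have "?\<tau> 0 = a" "?\<tau> 1 = b" using assms False by (auto simp: transpose_def)
  ultimately show ?thesis by blast
qed

lemma sum_permutations_pair:
  assumes "2 \<le> (n::nat)" "a < n" "b < n" "a \<noteq> b"
  shows "(\<Sum>\<sigma>\<in>{\<sigma>. \<sigma> permutes {..<n}}. g (\<sigma> a) (\<sigma> b)) = (\<Sum>\<sigma>\<in>{\<sigma>. \<sigma> permutes {..<n}}. g (\<sigma> 0) (\<sigma> 1))"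
proof -
  obtain \<tau> where t: "\<tau> permutes {..<n}" "\<tau> 0 = a" "\<tau> 1 = b" using permutes_pair_exists[OF assms] by blast
  show ?thesis using sum_permutations_compose_right[OF t(1), of "\<lambda>\<sigma>. g (\<sigma> 0) (\<sigma> 1)"] t by simp
qed

lemma sum_offdiag_permute:
  assumes "\<sigma> permutes {..<n}"
  shows "(\<Sum>a<n. \<Sum>b<n. if a = b then 0 else g (\<sigma> a) (\<sigma> b)) = (\<Sum>i<n. \<Sum>j<n. if i = j then 0 else (g i j::'a::comm_monoid_add))"
proof -
  have inj: "\<And>k l. \<sigma> k = \<sigma> l \<longleftrightarrow> k = l" using permutes_inj[OF assms] by (meson injD)
  have "(\<Sum>b<n. if a = b then 0 else g (\<sigma> a) (\<sigma> b)) = (\<Sum>j<n. if \<sigma> a = j then 0 else g (\<sigma> a) j)" for a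
  proof -
    have "(\<Sum>b<n. if a = b then 0 else g (\<sigma> a) (\<sigma> b)) = (\<Sum>b<n. ((\<lambda>j. if \<sigma> a = j then 0 else g (\<sigma> a) j) \<circ> \<sigma>) b)"
      by (intro sum.cong) (auto simp: inj)
    also have "\<dots> = (\<Sum>j<n. if \<sigma> a = j then 0 else g (\<sigma> a) j)" by (rule sum.permute[OF assms, symmetric])
    finally show ?thesis .
  qed
  then have "(\<Sum>a<n. \<Sum>b<n. if a = b then 0 else g (\<sigma> a) (\<sigma> b)) = (\<Sum>a<n. ((\<lambda>i. \<Sum>j<n. if i = j then 0 else g i j) \<circ> \<sigma>) a)"
    by simp
  also have "\<dots> = (\<Sum>i<n. \<Sum>j<n. if i = j then 0 else g i j)" by (rule sum.permute[OF assms, symmetric])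
  finally show ?thesis .
qed

lemma sum_permutations_offdiag:
  assumes n: "2 \<le> n"
  shows "of_nat (n*(n-1)) * (\<Sum>\<sigma>\<in>{\<sigma>. \<sigma> permutes {..<n}}. g (\<sigma> 0) (\<sigma> 1)) =
     of_nat (fact n) * (\<Sum>i<n. \<Sum>j<n. if i = j then 0 else (g i j::'a::comm_semiring_1))"
proof -
  let ?P = "{\<sigma>. \<sigma> permutes {..<n}}"
  let ?S0 = "\<Sum>\<sigma>\<in>?P. g (\<sigma> 0) (\<sigma> 1)"
  let ?X = "\<Sum>a<n. \<Sum>b<n. if a = b then 0 else \<Sum>\<sigma>\<in>?P. g (\<sigma> a) (\<sigma> b)"
  have "?X = (\<Sum>a<n. \<Sum>b<n. if a = b then 0 else ?S0)"
    using sum_permutations_pair[OF n] by (intro sum.cong refl) auto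
  also have "\<dots> = (\<Sum>a<n. of_nat (n - 1) * ?S0)"
    by (intro sum.cong refl) (simp add: sum_offdiag_const[of "{..<n}"])
  also have "\<dots> = of_nat (n*(n-1)) * ?S0" by (simp add: mult.assoc)
  finally have A: "?X = of_nat (n*(n-1)) * ?S0" .
  have "?X = (\<Sum>a<n. \<Sum>b<n. \<Sum>\<sigma>\<in>?P. if a = b then 0 else g (\<sigma> a) (\<sigma> b))"
    by (intro sum.cong refl) simp
  also have "\<dots> = (\<Sum>\<sigma>\<in>?P. \<Sum>a<n. \<Sum>b<n. if a = b then 0 else g (\<sigma> a) (\<sigma> b))"
    by (rule trans[OF sum.cong[OF refl sum.swap] sum.swap])
  also have "\<dots> = (\<Sum>\<sigma>\<in>?P. \<Sum>i<n. \<Sum>j<n. if i = j then 0 else g i j)"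
    by (rule sum.cong[OF refl]) (simp add: sum_offdiag_permute)
  also have "\<dots> = of_nat (fact n) * (\<Sum>i<n. \<Sum>j<n. if i = j then 0 else g i j)"
    by (simp add: card_permutations)
  finally have B: "?X = of_nat (fact n) * (\<Sum>i<n. \<Sum>j<n. if i = j then 0 else g i j)" .
  show ?thesis using trans[OF sym[OF A] B] .
qed

lemma wperm_length[simp]: "length (wperm n \<sigma> w) = n"
  by (simp add: wperm_def)

lemma wperm_nth[simp]: "i < n \<Longrightarrow> wperm n \<sigma> w ! i = w ! \<sigma> i"
  by (simp add: wperm_def)

lemma wperm_inv_wperm:
  assumes "\<sigma> permutes {..<n}" "length w = n"
  shows "wperm n (inv \<sigma>) (wperm n \<sigma> w) = w"
proof (rule nth_equalityI)
  show "length (wperm n (inv \<sigma>) (wperm n \<sigma> w)) = length w" using assms by simp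
  fix i assume "i < length (wperm n (inv \<sigma>) (wperm n \<sigma> w))"
  then have i: "i < n" by simp
  have "inv \<sigma> i < n" using permutes_in_image[OF permutes_inv[OF assms(1)]] i by simp
  then show "wperm n (inv \<sigma>) (wperm n \<sigma> w) ! i = w ! i"
    using i by (simp add: permutes_inverses[OF assms(1)])
qed

lemma wperm_wperm_inv:
  assumes "\<sigma> permutes {..<n}" "length w = n"
  shows "wperm n \<sigma> (wperm n (inv \<sigma>) w) = w"
  using wperm_inv_wperm[OF permutes_inv[OF assms(1)] assms(2)] permutes_inv_inv[OF assms(1)] by simp

lemma set_wperm_subset:
  assumes "\<sigma> permutes {..<n}" "length w = n" shows "set (wperm n \<sigma> w) \<subseteq> set w"
proof
  fix x assume "x \<in> set (wperm n \<sigma> w)"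
  then obtain i where i: "i < n" "x = w ! \<sigma> i" by (auto simp: wperm_def)
  have "\<sigma> i < n" using permutes_in_image[OF assms(1), of i] i(1) by simp
  then show "x \<in> set w" using i(2) assms(2) by simp
qed

lemma wperm_words: "\<sigma> permutes {..<n} \<Longrightarrow> w \<in> words n \<Longrightarrow> wperm n \<sigma> w \<in> words n"
  using set_wperm_subset[of \<sigma> n w] by (auto simp: words_def)

lemma wperm_bin_words: "\<sigma> permutes {..<n} \<Longrightarrow> w \<in> bin_words n \<Longrightarrow> wperm n \<sigma> w \<in> bin_words n"
  using set_wperm_subset[of \<sigma> n w] by (auto simp: bin_words_def)

lemma wperm_inj:
  assumes "\<sigma> permutes {..<n}" "length u = n" "length v = n"
  shows "wperm n \<sigma> u = wperm n \<sigma> v \<longleftrightarrow> u = v"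
  using wperm_inv_wperm[OF assms(1) assms(2)] wperm_inv_wperm[OF assms(1) assms(3)] by metis

lemma wperm_bij:
  assumes "\<sigma> permutes {..<n}"
  shows "bij_betw (wperm n \<sigma>) (words n) (words n)"
proof (rule bij_betw_byWitness[where f' = "wperm n (inv \<sigma>)"])
  show "\<forall>w\<in>words n. wperm n (inv \<sigma>) (wperm n \<sigma> w) = w" using wperm_inv_wperm[OF assms] by (auto simp: words_def)
  show "\<forall>w\<in>words n. wperm n \<sigma> (wperm n (inv \<sigma>) w) = w" using wperm_wperm_inv[OF assms] by (auto simp: words_def)
  show "wperm n \<sigma> ` words n \<subseteq> words n" using wperm_words[OF assms] by auto
  show "wperm n (inv \<sigma>) ` words n \<subseteq> words n" using wperm_words[OF permutes_inv[OF assms]] by auto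
qed

lemma kron_prod: "length w = n \<Longrightarrow> length u = n \<Longrightarrow> length v = n \<Longrightarrow>
  kron w u v = (\<Prod>i<n. qmat (w!i) (u!i) (v!i))"
proof (induction n arbitrary: w u v)
  case 0 then show ?case by simp
next
  case (Suc n)
  from Suc.prems(1) obtain a w' where w: "w = a#w'" "length w' = n" by (cases w) auto
  from Suc.prems(2) obtain b u' where u: "u = b#u'" "length u' = n" by (cases u) auto
  from Suc.prems(3) obtain c v' where v: "v = c#v'" "length v' = n" by (cases v) auto
  have "kron w u v = qmat a b c * kron w' u' v'" by (simp add: w u v)
  also have "\<dots> = qmat a b c * (\<Prod>i<n. qmat (w'!i) (u'!i) (v'!i))" using Suc.IH[OF w(2) u(2) v(2)] by simp
  also have "\<dots> = (\<Prod>i<Suc n. qmat (w!i) (u!i) (v!i))" by (simp only: prod.lessThan_Suc_shift w u v nth_Cons_0 nth_Cons_Suc)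
  finally show ?case .
qed

lemma kron_wperm:
  assumes "\<sigma> permutes {..<n}" "length w = n" "length u = n" "length v = n"
  shows "kron (wperm n \<sigma> w) (wperm n \<sigma> u) (wperm n \<sigma> v) = kron w u v"
proof -
  have "kron (wperm n \<sigma> w) (wperm n \<sigma> u) (wperm n \<sigma> v) = (\<Prod>i<n. qmat (w!\<sigma> i) (u!\<sigma> i) (v!\<sigma> i))"
    by (simp add: kron_prod)
  also have "\<dots> = (\<Prod>i<n. qmat (w!i) (u!i) (v!i))"
    using prod.permute[OF assms(1), of "\<lambda>i. qmat (w!i) (u!i) (v!i)"] by (simp add: o_def)
  finally show ?thesis using assms by (simp add: kron_prod)
qed

lemma rep_mat_wperm:
  assumes "\<sigma> permutes {..<n}" "length u = n" "length v = n"
  shows "(\<Sum>w\<in>words n. x (wperm n \<sigma> w) * kron w u v) = rep_mat n x (wperm n \<sigma> u) (wperm n \<sigma> v)"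
proof -
  have "rep_mat n x (wperm n \<sigma> u) (wperm n \<sigma> v)
      = (\<Sum>w\<in>words n. x (wperm n \<sigma> w) * kron (wperm n \<sigma> w) (wperm n \<sigma> u) (wperm n \<sigma> v))"
    unfolding rep_mat_def by (rule sum.reindex_bij_betw[symmetric, OF wperm_bij[OF assms(1)]])
  also have "\<dots> = (\<Sum>w\<in>words n. x (wperm n \<sigma> w) * kron w u v)"
    by (intro sum.cong refl) (simp add: kron_wperm assms words_def)
  finally show ?thesis by simp
qed

lemma rep_mat_tsym:
  assumes "length u = n" "length v = n"
  shows "rep_mat n (tsym n x) u v = (1 / of_nat (fact n)) * (\<Sum>\<sigma>\<in>{\<sigma>. \<sigma> permutes {..<n}}. rep_mat n x (wperm n \<sigma> u) (wperm n \<sigma> v))"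
proof -
  have "rep_mat n (tsym n x) u v = (\<Sum>w\<in>words n. \<Sum>\<sigma>\<in>{\<sigma>. \<sigma> permutes {..<n}}. (1 / of_nat (fact n)) * (x (wperm n \<sigma> w) * kron w u v))"
    unfolding rep_mat_def tsym_def by (intro sum.cong refl) (simp add: sum_distrib_left sum_distrib_right algebra_simps)
  also have "\<dots> = (\<Sum>\<sigma>\<in>{\<sigma>. \<sigma> permutes {..<n}}. \<Sum>w\<in>words n. (1 / of_nat (fact n)) * (x (wperm n \<sigma> w) * kron w u v))"
    by (rule sum.swap)
  also have "\<dots> = (\<Sum>\<sigma>\<in>{\<sigma>. \<sigma> permutes {..<n}}. (1 / of_nat (fact n)) * rep_mat n x (wperm n \<sigma> u) (wperm n \<sigma> v))"
  proof (intro sum.cong refl)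
    fix \<sigma> assume "\<sigma> \<in> {\<sigma>. \<sigma> permutes {..<n}}"
    then show "(\<Sum>w\<in>words n. (1 / of_nat (fact n)) * (x (wperm n \<sigma> w) * kron w u v))
       = (1 / of_nat (fact n)) * rep_mat n x (wperm n \<sigma> u) (wperm n \<sigma> v)"
      using rep_mat_wperm[of \<sigma> n u v x] assms by (simp only: sum_distrib_left[symmetric] mem_Collect_eq)
  qed
  also have "\<dots> = (1 / of_nat (fact n)) * (\<Sum>\<sigma>\<in>{\<sigma>. \<sigma> permutes {..<n}}. rep_mat n x (wperm n \<sigma> u) (wperm n \<sigma> v))"
    by (simp add: sum_distrib_left)
  finally show ?thesis .
qed

definition swap_at :: "nat \<Rightarrow> nat \<Rightarrow> nat list \<Rightarrow> nat list" where
  "swap_at i j u = u[i := u!j, j := u!i]"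

lemma swap_at_length[simp]: "length (swap_at i j u) = length u"
  by (simp add: swap_at_def)

lemma swap_at_nth: "i < length u \<Longrightarrow> j < length u \<Longrightarrow> k < length u \<Longrightarrow>
  swap_at i j u ! k = (if k = j then u!i else if k = i then u!j else u!k)"
  by (simp add: swap_at_def nth_list_update)

lemma swap_at_bin_words: "u \<in> bin_words n \<Longrightarrow> i < n \<Longrightarrow> j < n \<Longrightarrow> swap_at i j u \<in> bin_words n"
proof -
  assume u: "u \<in> bin_words n" and ij: "i < n" "j < n"
  then have l: "length u = n" and s: "set u \<subseteq> {0,1}" by (auto simp: bin_words_def)
  have "u ! i \<in> {0,1}" "u ! j \<in> {0,1}" using s l ij nth_mem by blast+
  then have "set (u[i := u!j, j := u!i]) \<subseteq> {0,1}"
    by (intro set_update_subsetI s)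
  then show ?thesis using l by (simp add: bin_words_def swap_at_def)
qed

lemma swap_at_commute: "i < length u \<Longrightarrow> j < length u \<Longrightarrow> swap_at i j u = swap_at j i u"
  by (rule nth_equalityI) (auto simp: swap_at_nth)

lemma wperm_swap_at:
  assumes "\<sigma> permutes {..<n}" "length u = n" "a < n" "b < n"
  shows "wperm n \<sigma> (swap_at (\<sigma> a) (\<sigma> b) u) = swap_at a b (wperm n \<sigma> u)"
proof (rule nth_equalityI)
  show "length (wperm n \<sigma> (swap_at (\<sigma> a) (\<sigma> b) u)) = length (swap_at a b (wperm n \<sigma> u))" by simp
  fix i assume "i < length (wperm n \<sigma> (swap_at (\<sigma> a) (\<sigma> b) u))"
  then have i: "i < n" by simp
  have s: "\<And>k. k < n \<Longrightarrow> \<sigma> k < n" using permutes_in_image[OF assms(1)] by simp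
  have inj: "\<And>k l. \<sigma> k = \<sigma> l \<longleftrightarrow> k = l" using permutes_inj[OF assms(1)] by (meson injD)
  have *: "\<sigma> i < n" "\<sigma> a < n" "\<sigma> b < n" using s i assms by auto
  have "wperm n \<sigma> (swap_at (\<sigma> a) (\<sigma> b) u) ! i = swap_at (\<sigma> a) (\<sigma> b) u ! \<sigma> i" using i by simp
  also have "\<dots> = (if \<sigma> i = \<sigma> b then u ! \<sigma> a else if \<sigma> i = \<sigma> a then u ! \<sigma> b else u ! \<sigma> i)"
    using * assms(2) by (simp add: swap_at_nth)
  also have "\<dots> = (if i = b then u ! \<sigma> a else if i = a then u ! \<sigma> b else u ! \<sigma> i)"
    by (simp only: inj)
  also have "\<dots> = swap_at a b (wperm n \<sigma> u) ! i" using i assms(3,4) by (simp add: swap_at_nth)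
  finally show "wperm n \<sigma> (swap_at (\<sigma> a) (\<sigma> b) u) ! i = swap_at a b (wperm n \<sigma> u) ! i" .
qed

lemma wperm_transpose:
  assumes "length u = n" "i < n" "j < n"
  shows "wperm n (Transposition.transpose i j) u = swap_at i j u"
proof (rule nth_equalityI)
  show "length (wperm n (Transposition.transpose i j) u) = length (swap_at i j u)" using assms by simp
  fix k assume "k < length (wperm n (Transposition.transpose i j) u)"
  then have k: "k < n" by simp
  have "wperm n (Transposition.transpose i j) u ! k = u ! (Transposition.transpose i j k)" using k by simp
  also have "\<dots> = swap_at i j u ! k"
    using k assms by (cases "k = i"; cases "k = j") (simp_all add: swap_at_nth)
  finally show "wperm n (Transposition.transpose i j) u ! k = swap_at i j u ! k" .
qed

section \<open>The action of \<open>\<triangle>\<close>\<close>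

lemma qmat_delta:
  assumes "a0 \<le> 1" "a1 \<le> 1" "b0 \<le> 1" "b1 \<le> 1"
  shows "(\<Sum>i<4. qmat i a0 b0 * qmat i a1 b1) =
    2 * (if a0 = b0 \<and> a1 = b1 then 1 else 0) - 2 * (if a0 = b1 \<and> a1 = b0 then 1 else 0)"
proof -
  have "(\<Sum>i<4. qmat i a0 b0 * qmat i a1 b1) = qmat 0 a0 b0 * qmat 0 a1 b1 + qmat 1 a0 b0 * qmat 1 a1 b1
     + qmat 2 a0 b0 * qmat 2 a1 b1 + qmat 3 a0 b0 * qmat 3 a1 b1"
    by (simp add: numeral_eq_Suc)
  also have "\<dots> = 2 * (if a0 = b0 \<and> a1 = b1 then 1 else 0) - 2 * (if a0 = b1 \<and> a1 = b0 then 1 else 0)"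
    using nat_le_1_cases[OF assms(1)] nat_le_1_cases[OF assms(2)] nat_le_1_cases[OF assms(3)] nat_le_1_cases[OF assms(4)]
    by (elim disjE; simp add: qmat_def)
  finally show ?thesis .
qed

lemma bin_words_Cons_Cons:
  assumes n: "2 \<le> n" and u: "u \<in> bin_words n"
  shows "\<exists>a0 a1 u'. u = a0#a1#u' \<and> a0 \<le> 1 \<and> a1 \<le> 1 \<and> u' \<in> bin_words (n-2)"
proof -
  have l: "length u = n" and s: "set u \<subseteq> {0,1}" using u by (auto simp: bin_words_def)
  obtain a0 r where r: "u = a0 # r" using l n by (cases u) auto
  obtain a1 u' where r2: "r = a1 # u'" using l n r by (cases r) auto
  show ?thesis using l s r r2 by (auto simp: bin_words_def)
qed

lemma rep_mat_deltaH0: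
  assumes n: "2 \<le> n" and u: "u \<in> bin_words n" and v: "v \<in> bin_words n"
  shows "rep_mat n (deltaH0 n) u v = (if u = v then 1/2 else 0) - (if v = swap_at 0 1 u then 1/2 else 0)"
proof -
  define f where "f i = [i,i] @ replicate (n-2) (0::nat)" for i :: nat
  have fw: "f ` {..<4} \<subseteq> words n" using n
    by (auto simp: f_def words_def set_replicate_conv_if split: if_splits)
  have finj: "inj_on f {..<4}" by (auto simp: f_def inj_on_def)
  have d: "deltaH0 n w = (if w \<in> f ` {..<4} then 1/4 else 0)" for w
    by (auto simp: deltaH0_def f_def)
  have "rep_mat n (deltaH0 n) u v = (\<Sum>w\<in>words n. if w \<in> f ` {..<4} then 1/4 * kron w u v else 0)"
    unfolding rep_mat_def d by (intro sum.cong refl) simp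
  also have "\<dots> = (\<Sum>w\<in>f ` {..<4}. 1/4 * kron w u v)"
    using sum.inter_restrict[OF finite_words[of n], where g = "\<lambda>w. 1/4 * kron w u v" and B = "f ` {..<4}"]
    by (simp add: Int_absorb1[OF fw])
  also have "\<dots> = (\<Sum>i<4. 1/4 * kron (f i) u v)"
    by (simp add: sum.reindex[OF finj])
  finally have 1: "rep_mat n (deltaH0 n) u v = (\<Sum>i<4. 1/4 * kron (f i) u v)" .
  obtain a0 a1 u' where uu: "u = a0#a1#u'" "a0 \<le> 1" "a1 \<le> 1" "u' \<in> bin_words (n-2)"
    using bin_words_Cons_Cons[OF n u] by blast
  obtain b0 b1 v' where vv: "v = b0#b1#v'" "b0 \<le> 1" "b1 \<le> 1" "v' \<in> bin_words (n-2)"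
    using bin_words_Cons_Cons[OF n v] by blast
  have lu: "length u' = n - 2" and lv: "length v' = n - 2" using uu vv by (auto simp: bin_words_def)
  have "kron (f i) u v = qmat i a0 b0 * qmat i a1 b1 * (if u' = v' then 1 else 0)" for i
    by (simp add: f_def uu vv kron_replicate_0 lu lv)
  then have "rep_mat n (deltaH0 n) u v = 1/4 * (\<Sum>i<4. qmat i a0 b0 * qmat i a1 b1) * (if u' = v' then 1 else 0)"
    unfolding 1 by (simp add: sum_distrib_left sum_distrib_right algebra_simps)
  also have "\<dots> = (if u = v then 1/2 else 0) - (if v = swap_at 0 1 u then 1/2 else 0)"
  proof -
    have e1: "(u = v) = ((a0 = b0 \<and> a1 = b1) \<and> u' = v')" by (auto simp: uu vv)
    have sw: "swap_at 0 1 u = a1 # a0 # u'" by (simp add: uu swap_at_def)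
    have e2: "(v = swap_at 0 1 u) = ((a0 = b1 \<and> a1 = b0) \<and> u' = v')" unfolding sw by (auto simp: vv)
    have "1/4 * (2 * (if P then 1 else 0) - 2 * (if Q then 1 else 0)) * (if R then 1 else 0)
        = (if P \<and> R then 1/2 else 0) - (if Q \<and> R then 1/2 else (0::complex))" for P Q R
      by (cases P; cases Q; cases R) simp_all
    then show ?thesis unfolding qmat_delta[OF uu(2,3) vv(2,3)] e1 e2 .
  qed
  finally show ?thesis .
qed

lemma rep_mat_deltaH:
  assumes n: "2 \<le> n" and u: "u \<in> bin_words n" and v: "v \<in> bin_words n"
  shows "rep_mat n (deltaH n) u v = (if u = v then 1/2 else 0)
     - (1 / (2 * of_nat (n*(n-1)))) * (\<Sum>i<n. \<Sum>j<n. if i = j then 0 else (if v = swap_at i j u then 1 else 0))"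
proof -
  let ?P = "{\<sigma>. \<sigma> permutes {..<n}}"
  define g where "g i j = (if v = swap_at i j u then 1 else (0::complex))" for i j
  define c where "c = (if u = v then 1/2 else (0::complex))"
  have lu: "length u = n" and lv: "length v = n" using u v by (auto simp: bin_words_def)
  have step: "rep_mat n (deltaH0 n) (wperm n \<sigma> u) (wperm n \<sigma> v) = c - 1/2 * g (\<sigma> 0) (\<sigma> 1)" if "\<sigma> \<in> ?P" for \<sigma>
  proof -
    from that have \<sigma>: "\<sigma> permutes {..<n}" by simp
    have e1: "(wperm n \<sigma> u = wperm n \<sigma> v) = (u = v)" by (rule wperm_inj[OF \<sigma> lu lv])
    have "swap_at 0 1 (wperm n \<sigma> u) = wperm n \<sigma> (swap_at (\<sigma> 0) (\<sigma> 1) u)" using wperm_swap_at[OF \<sigma> lu, of 0 1] n by simp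
    then have e2: "(wperm n \<sigma> v = swap_at 0 1 (wperm n \<sigma> u)) = (v = swap_at (\<sigma> 0) (\<sigma> 1) u)"
      using wperm_inj[OF \<sigma> lv, of "swap_at (\<sigma> 0) (\<sigma> 1) u"] lu by simp
    have "rep_mat n (deltaH0 n) (wperm n \<sigma> u) (wperm n \<sigma> v) = c - (if v = swap_at (\<sigma> 0) (\<sigma> 1) u then 1/2 else 0)"
      unfolding rep_mat_deltaH0[OF n wperm_bin_words[OF \<sigma> u] wperm_bin_words[OF \<sigma> v]] e1 e2 c_def ..
    also have "\<dots> = c - 1/2 * g (\<sigma> 0) (\<sigma> 1)"
      unfolding g_def by (cases "v = swap_at (\<sigma> 0) (\<sigma> 1) u") simp_all
    finally show ?thesis .
  qed
  have fn: "of_nat (fact n) \<noteq> (0::complex)" by simp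
  have nn: "of_nat (n*(n-1)) \<noteq> (0::complex)" using n by simp
  have cnt: "of_nat (n*(n-1)) * (\<Sum>\<sigma>\<in>?P. g (\<sigma> 0) (\<sigma> 1)) = of_nat (fact n) * (\<Sum>i<n. \<Sum>j<n. if i = j then 0 else g i j)"
    by (rule sum_permutations_offdiag[OF n])
  have "rep_mat n (deltaH n) u v = 1 / of_nat (fact n) * (\<Sum>\<sigma>\<in>?P. rep_mat n (deltaH0 n) (wperm n \<sigma> u) (wperm n \<sigma> v))"
    unfolding deltaH_def by (rule rep_mat_tsym[OF lu lv])
  also have "\<dots> = 1 / of_nat (fact n) * (\<Sum>\<sigma>\<in>?P. c - 1/2 * g (\<sigma> 0) (\<sigma> 1))"
    using step by simp
  also have "\<dots> = 1 / of_nat (fact n) * (of_nat (fact n) * c - 1/2 * (\<Sum>\<sigma>\<in>?P. g (\<sigma> 0) (\<sigma> 1)))"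
    by (simp add: sum_subtractf card_permutations sum_divide_distrib)
  also have "\<dots> = c - 1 / (2 * of_nat (n*(n-1))) * (of_nat (n*(n-1)) * (\<Sum>\<sigma>\<in>?P. g (\<sigma> 0) (\<sigma> 1))) / of_nat (fact n)"
    using fn nn by (simp add: field_simps)
  also have "\<dots> = c - 1 / (2 * of_nat (n*(n-1))) * (\<Sum>i<n. \<Sum>j<n. if i = j then 0 else g i j)"
    unfolding cnt using fn by simp
  finally show ?thesis unfolding c_def g_def .
qed

text \<open>By \<open>qmat_delta\<close>, \<open>\<triangle>\<^sub>\<bbbH>\<close> acts on \<open>\<complex>\<^sup>2 \<otimes> \<complex>\<^sup>2\<close> as \<open>(1 - P)/2\<close> with \<open>P\<close> the flip; symmetrising
  replaces \<open>P\<close> by the average of all transpositions of positions.\<close>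
definition delta_op :: "nat \<Rightarrow> (nat list \<Rightarrow> complex) \<Rightarrow> nat list \<Rightarrow> complex" where
  "delta_op n z = (\<lambda>u. if u \<in> bin_words n then z u / 2
     - (1 / (2 * of_nat (n*(n-1)))) * (\<Sum>i<n. \<Sum>j<n. if i = j then 0 else z (swap_at i j u)) else 0)"

lemma lin_op_delta_op: "lin_op (delta_op n)"
proof -
  define c where "c = 1 / (2 * of_nat (n*(n-1)) :: complex)"
  define S where "S z u = (\<Sum>i<n. \<Sum>j<n. if i = j then 0 else (z::nat list \<Rightarrow> complex) (swap_at i j u))" for z u
  have K: "delta_op n z = (\<lambda>u. if u \<in> bin_words n then z u / 2 - c * S z u else 0)" for z
    unfolding delta_op_def S_def c_def ..
  have "S (\<lambda>u. x u + y u) u = S x u + S y u" for x y u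
    unfolding S_def sum.distrib[symmetric] by (intro sum.cong) auto
  moreover have "S (\<lambda>u. a * x u) u = a * S x u" for a x u
    unfolding S_def sum_distrib_left by (intro sum.cong) auto
  ultimately show ?thesis unfolding lin_op_def K by (auto simp: fun_eq_iff algebra_simps)
qed

lemma sum_bin_words_swap_at_indicator:
  assumes u: "u \<in> bin_words n"
  shows "(\<Sum>v\<in>bin_words n. (\<Sum>i<n. \<Sum>j<n. if i = j then 0 else if v = swap_at i j u then 1 else 0) * z v)
    = (\<Sum>i<n. \<Sum>j<n. if i = j then 0 else (z (swap_at i j u) :: complex))"
proof -
  have "(\<Sum>v\<in>bin_words n. (\<Sum>i<n. \<Sum>j<n. if i = j then 0 else if v = swap_at i j u then 1 else 0) * z v)
      = (\<Sum>i<n. \<Sum>j<n. \<Sum>v\<in>bin_words n. (if i = j then 0 else if v = swap_at i j u then 1 else 0) * z v)"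
    unfolding sum_distrib_right by (rule trans[OF sum.swap sum.cong[OF refl sum.swap]])
  also have "\<dots> = (\<Sum>i<n. \<Sum>j<n. if i = j then 0 else z (swap_at i j u))"
  proof (intro sum.cong refl)
    fix i j assume "i \<in> {..<n}" "j \<in> {..<n}"
    then have "swap_at i j u \<in> bin_words n" using swap_at_bin_words[OF u] by simp
    moreover have "(\<Sum>v\<in>bin_words n. (if i = j then 0 else if v = swap_at i j u then 1 else 0) * z v)
        = (\<Sum>v\<in>bin_words n. if i = j then 0 else if v = swap_at i j u then z v else 0)"
      by (rule sum.cong) auto
    ultimately show "(\<Sum>v\<in>bin_words n. (if i = j then 0 else if v = swap_at i j u then 1 else 0) * z v)
        = (if i = j then 0 else z (swap_at i j u))"
      by simp
  qed
  finally show ?thesis .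
qed

lemma rep_deltaH:
  assumes n: "2 \<le> n"
  shows "rep n (deltaH n) z = delta_op n z"
proof (rule ext)
  fix u
  show "rep n (deltaH n) z u = delta_op n z u"
  proof (cases "u \<in> bin_words n")
    case True
    define c where "c = (1 / (2 * of_nat (n*(n-1))) :: complex)"
    define T where "T v = (\<Sum>i<n. \<Sum>j<n. if i = j then 0 else if v = swap_at i j u then 1 else (0::complex))" for v
    have "rep n (deltaH n) z u = (\<Sum>v\<in>bin_words n. ((if u = v then 1/2 else 0) - c * T v) * z v)"
      unfolding rep_def c_def T_def using True by (simp add: rep_mat_deltaH[OF n True])
    also have "\<dots> = (\<Sum>v\<in>bin_words n. (if u = v then 1/2 else 0) * z v) - c * (\<Sum>v\<in>bin_words n. T v * z v)"
      by (simp add: sum_subtractf sum_distrib_left left_diff_distrib mult.assoc)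
    also have "(\<Sum>v\<in>bin_words n. (if u = v then 1/2 else 0) * z v) = z u / 2"
    proof -
      have "(\<Sum>v\<in>bin_words n. (if u = v then 1/2 else 0) * z v) = (\<Sum>v\<in>bin_words n. if u = v then z v / 2 else 0)"
        by (rule sum.cong) auto
      then show ?thesis using True by simp
    qed
    also have "(\<Sum>v\<in>bin_words n. T v * z v) = (\<Sum>i<n. \<Sum>j<n. if i = j then 0 else z (swap_at i j u))"
      unfolding T_def by (rule sum_bin_words_swap_at_indicator[OF True])
    finally show ?thesis using True by (simp add: delta_op_def c_def)
  qed (simp add: rep_def delta_op_def)
qed

section \<open>The \<open>sl\<^sub>2\<close> raising and lowering operators\<close>

definition weight :: "nat list \<Rightarrow> nat" where
  "weight u = card {i. i < length u \<and> u!i = 1}"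

definition ones_at :: "nat \<Rightarrow> nat list \<Rightarrow> nat set" where
  "ones_at n u = {i. i < n \<and> u!i = 1}"

definition zeros_at :: "nat \<Rightarrow> nat list \<Rightarrow> nat set" where
  "zeros_at n u = {i. i < n \<and> u!i = 0}"

definition lower_op :: "nat \<Rightarrow> (nat list \<Rightarrow> complex) \<Rightarrow> nat list \<Rightarrow> complex" where
  "lower_op n z = (\<lambda>u. if u \<in> bin_words n then (\<Sum>j\<in>zeros_at n u. z (u[j:=1])) else 0)"

definition raise_op :: "nat \<Rightarrow> (nat list \<Rightarrow> complex) \<Rightarrow> nat list \<Rightarrow> complex" where
  "raise_op n z = (\<lambda>u. if u \<in> bin_words n then (\<Sum>i\<in>ones_at n u. z (u[i:=0])) else 0)"

lemma lin_op_raise_op: "lin_op (raise_op n)"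
  unfolding lin_op_def raise_op_def by (auto simp: fun_eq_iff sum.distrib sum_distrib_left)

lemma lin_op_lower_op: "lin_op (lower_op n)"
  unfolding lin_op_def lower_op_def by (auto simp: fun_eq_iff sum.distrib sum_distrib_left)

lemma lin_op_raise_lower: "lin_op (\<lambda>z. raise_op n (lower_op n z))"
  by (rule lin_op_comp[OF lin_op_raise_op lin_op_lower_op])

lemma finite_ones_at[simp]: "finite (ones_at n u)" by (simp add: ones_at_def)
lemma finite_zeros_at[simp]: "finite (zeros_at n u)" by (simp add: zeros_at_def)

lemma ones_at_zeros_at_disj: "ones_at n u \<inter> zeros_at n u = {}"
  by (auto simp: ones_at_def zeros_at_def)

lemma ones_at_zeros_at_union:
  assumes u: "u \<in> bin_words n" shows "ones_at n u \<union> zeros_at n u = {..<n}"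
proof
  show "ones_at n u \<union> zeros_at n u \<subseteq> {..<n}" by (auto simp: ones_at_def zeros_at_def)
  show "{..<n} \<subseteq> ones_at n u \<union> zeros_at n u"
  proof
    fix x assume x: "x \<in> {..<n}"
    then have "u!x = 0 \<or> u!x = 1" using bin_words_nth[OF u] by simp
    then show "x \<in> ones_at n u \<union> zeros_at n u" using x by (auto simp: ones_at_def zeros_at_def)
  qed
qed

lemma weight_ones_at: "u \<in> bin_words n \<Longrightarrow> weight u = card (ones_at n u)"
  by (simp add: weight_def ones_at_def bin_words_length)

lemma card_zeros_at: "u \<in> bin_words n \<Longrightarrow> card (zeros_at n u) = n - weight u"
proof -
  assume u: "u \<in> bin_words n"
  have "card (ones_at n u) + card (zeros_at n u) = n"
    using card_Un_disjoint[OF finite_ones_at finite_zeros_at ones_at_zeros_at_disj, of n u] ones_at_zeros_at_union[OF u] by simp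
  then show ?thesis using weight_ones_at[OF u] by simp
qed

lemma weight_le: "u \<in> bin_words n \<Longrightarrow> weight u \<le> n"
  using card_zeros_at[of u n] weight_ones_at[of u n] card_mono[of "{..<n}" "ones_at n u"]
  by (auto simp: ones_at_def)

lemma list_update_bin_words: "u \<in> bin_words n \<Longrightarrow> (b::nat) \<le> 1 \<Longrightarrow> u[j:=b] \<in> bin_words n"
proof -
  assume u: "u \<in> bin_words n" and b: "b \<le> 1"
  have "set (u[j:=b]) \<subseteq> {0,1}" using u b by (intro set_update_subsetI) (auto simp: bin_words_def)
  then show ?thesis using u by (simp add: bin_words_def)
qed

lemma ones_at_upd1: "u \<in> bin_words n \<Longrightarrow> j \<in> zeros_at n u \<Longrightarrow> ones_at n (u[j:=1]) = insert j (ones_at n u)"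
  by (auto simp: ones_at_def zeros_at_def nth_list_update bin_words_length)

lemma zeros_at_upd0: "u \<in> bin_words n \<Longrightarrow> i \<in> ones_at n u \<Longrightarrow> zeros_at n (u[i:=0]) = insert i (zeros_at n u)"
  by (auto simp: ones_at_def zeros_at_def nth_list_update bin_words_length)

lemma ones_at_upd0: "u \<in> bin_words n \<Longrightarrow> i \<in> ones_at n u \<Longrightarrow> ones_at n (u[i:=0]) = ones_at n u - {i}"
  by (auto simp: ones_at_def nth_list_update bin_words_length)

lemma weight_upd1: "u \<in> bin_words n \<Longrightarrow> j \<in> zeros_at n u \<Longrightarrow> weight (u[j:=1]) = weight u + 1"
proof -
  assume u: "u \<in> bin_words n" and j: "j \<in> zeros_at n u"
  have "j \<notin> ones_at n u" using j ones_at_zeros_at_disj by blast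
  then show ?thesis using weight_ones_at[OF u] weight_ones_at[OF list_update_bin_words[OF u, of 1 j]] ones_at_upd1[OF u j] by simp
qed

lemma weight_upd0: "u \<in> bin_words n \<Longrightarrow> i \<in> ones_at n u \<Longrightarrow> weight (u[i:=0]) + 1 = weight u"
proof -
  assume u: "u \<in> bin_words n" and i: "i \<in> ones_at n u"
  have "card (ones_at n u - {i}) + 1 = card (ones_at n u)"
    using i card_Diff1_less[OF finite_ones_at i] by (simp add: card_Diff_singleton)
  then show ?thesis using weight_ones_at[OF u] weight_ones_at[OF list_update_bin_words[OF u, of 0 i]] ones_at_upd0[OF u i] by simp
qed

lemma swap_at_eq_updates: "u \<in> bin_words n \<Longrightarrow> i \<in> ones_at n u \<Longrightarrow> j \<in> zeros_at n u \<Longrightarrow> (u[i:=0])[j:=1] = swap_at i j u"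
  by (auto simp: swap_at_def ones_at_def zeros_at_def)

lemma swap_at_eq_updates': "u \<in> bin_words n \<Longrightarrow> i \<in> ones_at n u \<Longrightarrow> j \<in> zeros_at n u \<Longrightarrow> (u[j:=1])[i:=0] = swap_at i j u"
proof -
  assume a: "u \<in> bin_words n" "i \<in> ones_at n u" "j \<in> zeros_at n u"
  then have "i \<noteq> j" using ones_at_zeros_at_disj by blast
  then have "(u[j:=1])[i:=0] = (u[i:=0])[j:=1]" by (rule list_update_swap[symmetric])
  then show ?thesis using swap_at_eq_updates[OF a] by simp
qed

lemma swap_at_same: "i < length u \<Longrightarrow> j < length u \<Longrightarrow> u!i = u!j \<Longrightarrow> swap_at i j u = u"
  by (rule nth_equalityI) (auto simp: swap_at_nth)

lemma raise_lower_expand: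
  assumes u: "u \<in> bin_words n"
  shows "raise_op n (lower_op n z) u = of_nat (weight u) * z u + (\<Sum>i\<in>ones_at n u. \<Sum>j\<in>zeros_at n u. z (swap_at i j u))"
proof -
  have "raise_op n (lower_op n z) u = (\<Sum>i\<in>ones_at n u. lower_op n z (u[i:=0]))" using u by (simp add: raise_op_def)
  also have "\<dots> = (\<Sum>i\<in>ones_at n u. z u + (\<Sum>j\<in>zeros_at n u. z (swap_at i j u)))"
  proof (rule sum.cong[OF refl])
    fix i assume i: "i \<in> ones_at n u"
    have ub: "u[i:=0] \<in> bin_words n" by (rule list_update_bin_words[OF u]) simp
    have ni: "i \<notin> zeros_at n u" using i ones_at_zeros_at_disj by blast
    have ui: "(u[i:=0])[i:=1] = u" using i u list_update_id[of u i] by (auto simp: ones_at_def bin_words_length)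
    have "lower_op n z (u[i:=0]) = (\<Sum>j\<in>insert i (zeros_at n u). z ((u[i:=0])[j:=1]))"
      using ub zeros_at_upd0[OF u i] by (simp add: lower_op_def)
    also have "\<dots> = z u + (\<Sum>j\<in>zeros_at n u. z ((u[i:=0])[j:=1]))"
      using ni ui by simp
    also have "(\<Sum>j\<in>zeros_at n u. z ((u[i:=0])[j:=1])) = (\<Sum>j\<in>zeros_at n u. z (swap_at i j u))"
      using swap_at_eq_updates[OF u i] by simp
    finally show "lower_op n z (u[i:=0]) = z u + (\<Sum>j\<in>zeros_at n u. z (swap_at i j u))" .
  qed
  also have "\<dots> = of_nat (weight u) * z u + (\<Sum>i\<in>ones_at n u. \<Sum>j\<in>zeros_at n u. z (swap_at i j u))"
    by (simp add: sum.distrib weight_ones_at[OF u])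
  finally show ?thesis .
qed

lemma lower_raise_expand:
  assumes u: "u \<in> bin_words n"
  shows "lower_op n (raise_op n z) u = of_nat (n - weight u) * z u + (\<Sum>j\<in>zeros_at n u. \<Sum>i\<in>ones_at n u. z (swap_at i j u))"
proof -
  have "lower_op n (raise_op n z) u = (\<Sum>j\<in>zeros_at n u. raise_op n z (u[j:=1]))" using u by (simp add: lower_op_def)
  also have "\<dots> = (\<Sum>j\<in>zeros_at n u. z u + (\<Sum>i\<in>ones_at n u. z (swap_at i j u)))"
  proof (rule sum.cong[OF refl])
    fix j assume j: "j \<in> zeros_at n u"
    have ub: "u[j:=1] \<in> bin_words n" by (rule list_update_bin_words[OF u]) simp
    have nj: "j \<notin> ones_at n u" using j ones_at_zeros_at_disj by blast
    have uj: "(u[j:=1])[j:=0] = u" using j u list_update_id[of u j] by (auto simp: zeros_at_def bin_words_length)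
    have "raise_op n z (u[j:=1]) = (\<Sum>i\<in>insert j (ones_at n u). z ((u[j:=1])[i:=0]))"
      using ub ones_at_upd1[OF u j] by (simp add: raise_op_def)
    also have "\<dots> = z u + (\<Sum>i\<in>ones_at n u. z ((u[j:=1])[i:=0]))"
      using nj uj by simp
    also have "(\<Sum>i\<in>ones_at n u. z ((u[j:=1])[i:=0])) = (\<Sum>i\<in>ones_at n u. z (swap_at i j u))"
      using swap_at_eq_updates'[OF u _ j] by simp
    finally show "raise_op n z (u[j:=1]) = z u + (\<Sum>i\<in>ones_at n u. z (swap_at i j u))" .
  qed
  also have "\<dots> = of_nat (n - weight u) * z u + (\<Sum>j\<in>zeros_at n u. \<Sum>i\<in>ones_at n u. z (swap_at i j u))"
    by (simp add: sum.distrib card_zeros_at[OF u])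
  finally show ?thesis .
qed

lemma lower_raise_commutator:
  assumes u: "u \<in> bin_words n"
  shows "lower_op n (raise_op n z) u = raise_op n (lower_op n z) u + (of_nat n - 2 * of_nat (weight u)) * z u"
proof -
  have sw: "(\<Sum>j\<in>zeros_at n u. \<Sum>i\<in>ones_at n u. z (swap_at i j u)) = (\<Sum>i\<in>ones_at n u. \<Sum>j\<in>zeros_at n u. z (swap_at i j u))"
    by (rule sum.swap)
  have e: "of_nat (n - weight u) = (of_nat n - of_nat (weight u) :: complex)"
    using weight_le[OF u] by (simp add: of_nat_diff)
  show ?thesis unfolding raise_lower_expand[OF u] lower_raise_expand[OF u] sw e by (simp add: algebra_simps)
qed

lemma sum_ones_zeros_split:
  assumes u: "u \<in> bin_words n"
  shows "(\<Sum>i<n. f i) = (\<Sum>i\<in>ones_at n u. f i) + (\<Sum>i\<in>zeros_at n u. (f i::'a::comm_monoid_add))"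
proof -
  have "(\<Sum>i<n. f i) = sum f (ones_at n u \<union> zeros_at n u)" by (simp add: ones_at_zeros_at_union[OF u])
  also have "\<dots> = sum f (ones_at n u) + sum f (zeros_at n u)"
    by (rule sum.union_disjoint) (auto simp: ones_at_zeros_at_disj)
  finally show ?thesis .
qed

lemma of_nat_mult_pred: "of_nat (k * (k - 1)) = (of_nat k * (of_nat k - 1) :: complex)"
  by (cases k) (simp_all add: algebra_simps)

lemma sum_offdiag_swap_at_same_letter:
  assumes "finite A" "i \<in> A" "\<And>j. j \<in> A \<Longrightarrow> j < length u \<and> u ! j = u ! i" "i < length u"
  shows "(\<Sum>j\<in>A. if i = j then 0 else z (swap_at i j u)) = of_nat (card A - 1) * (z u :: 'a::comm_semiring_1)"
proof -
  have "(\<Sum>j\<in>A. if i = j then 0 else z (swap_at i j u)) = (\<Sum>j\<in>A. if i = j then 0 else z u)"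
    using assms(3,4) by (intro sum.cong refl) (simp add: swap_at_same)
  then show ?thesis using sum_offdiag_const[OF assms(1,2)] by simp
qed

lemma sum_offdiag_swap_at:
  fixes z :: "nat list \<Rightarrow> 'a::comm_semiring_1"
  assumes u: "u \<in> bin_words n"
  shows "(\<Sum>i<n. \<Sum>j<n. if i = j then 0 else z (swap_at i j u))
    = of_nat (weight u * (weight u - 1)) * z u + of_nat ((n - weight u) * (n - weight u - 1)) * z u
      + 2 * (\<Sum>i\<in>ones_at n u. \<Sum>j\<in>zeros_at n u. z (swap_at i j u))"
proof -
  let ?O = "ones_at n u" and ?Z = "zeros_at n u"
  let ?G = "\<lambda>i j. if i = j then 0 else z (swap_at i j u)"
  have lu: "length u = n" using u by (simp add: bin_words_length)
  have "(\<Sum>j<n. ?G i j) = of_nat (card ?O - 1) * z u + (\<Sum>j\<in>?Z. z (swap_at i j u))" if i: "i \<in> ?O" for i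
  proof -
    have "(\<Sum>j\<in>?O. ?G i j) = of_nat (card ?O - 1) * z u"
      using i lu by (intro sum_offdiag_swap_at_same_letter) (auto simp: ones_at_def)
    moreover have "(\<Sum>j\<in>?Z. ?G i j) = (\<Sum>j\<in>?Z. z (swap_at i j u))"
      using i ones_at_zeros_at_disj by (intro sum.cong refl) auto
    ultimately show ?thesis using sum_ones_zeros_split[OF u, of "?G i"] by simp
  qed
  then have O: "(\<Sum>i\<in>?O. \<Sum>j<n. ?G i j) = of_nat (weight u * (weight u - 1)) * z u + (\<Sum>i\<in>?O. \<Sum>j\<in>?Z. z (swap_at i j u))"
    by (simp add: sum.distrib weight_ones_at[OF u] mult.assoc)
  have "(\<Sum>j<n. ?G i j) = (\<Sum>j\<in>?O. z (swap_at j i u)) + of_nat (card ?Z - 1) * z u" if i: "i \<in> ?Z" for i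
  proof -
    have "(\<Sum>j\<in>?Z. ?G i j) = of_nat (card ?Z - 1) * z u"
      using i lu by (intro sum_offdiag_swap_at_same_letter) (auto simp: zeros_at_def)
    moreover have "(\<Sum>j\<in>?O. ?G i j) = (\<Sum>j\<in>?O. z (swap_at j i u))"
      using i ones_at_zeros_at_disj lu by (intro sum.cong refl) (auto simp: ones_at_def zeros_at_def swap_at_commute)
    ultimately show ?thesis using sum_ones_zeros_split[OF u, of "?G i"] by simp
  qed
  then have Z: "(\<Sum>i\<in>?Z. \<Sum>j<n. ?G i j) = (\<Sum>i\<in>?O. \<Sum>j\<in>?Z. z (swap_at i j u)) + of_nat ((n - weight u) * (n - weight u - 1)) * z u"
    by (simp add: sum.distrib card_zeros_at[OF u] sum.swap[of _ ?Z ?O] mult.assoc)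
  show ?thesis
    unfolding sum_ones_zeros_split[OF u, of "\<lambda>i. \<Sum>j<n. ?G i j"] O Z by (simp add: algebra_simps mult_2)
qed

lemma delta_op_raise_lower:
  assumes n: "2 \<le> n" and u: "u \<in> bin_words n"
  shows "delta_op n z u = (of_nat (weight u) * (of_nat n - of_nat (weight u) + 1) * z u - raise_op n (lower_op n z) u) / of_nat (n*(n-1))"
proof -
  define k where "k = weight u"
  define X where "X = (\<Sum>i\<in>ones_at n u. \<Sum>j\<in>zeros_at n u. z (swap_at i j u))"
  have kn: "k \<le> n" using weight_le[OF u] k_def by simp
  have N: "of_nat n * (of_nat n - 1) \<noteq> (0::complex)" using n by simp
  have nk: "of_nat (n - k) = (of_nat n - of_nat k :: complex)" using kn by (simp add: of_nat_diff)
  have "delta_op n z u = z u / 2 - 1 / (2 * of_nat (n*(n-1))) * (of_nat (k * (k - 1)) * z u + of_nat ((n - k) * (n - k - 1)) * z u + 2 * X)"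
    using u unfolding delta_op_def sum_offdiag_swap_at[OF u] k_def X_def by simp
  also have "\<dots> = (of_nat k * (of_nat n - of_nat k + 1) * z u - (of_nat k * z u + X)) / of_nat (n*(n-1))"
    using N unfolding of_nat_mult_pred nk by (simp add: field_simps)
  also have "of_nat k * z u + X = raise_op n (lower_op n z) u"
    unfolding raise_lower_expand[OF u] X_def k_def ..
  finally show ?thesis unfolding k_def .
qed

lemma weight_swap_at:
  assumes u: "u \<in> bin_words n" and ij: "i < n" "j < n"
  shows "weight (swap_at i j u) = weight u"
proof -
  have lu: "length u = n" using u by (simp add: bin_words_length)
  have A: "weight (swap_at a b u) = weight u" if a: "a \<in> ones_at n u" and b: "b \<in> zeros_at n u" for a b
  proof -
    have "swap_at a b u = (u[a:=0])[b:=1]" using swap_at_eq_updates[OF u a b] by simp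
    moreover have ub: "u[a:=0] \<in> bin_words n" by (rule list_update_bin_words[OF u]) simp
    moreover have "b \<in> zeros_at n (u[a:=0])" using zeros_at_upd0[OF u a] b by simp
    ultimately have "weight (swap_at a b u) = weight (u[a:=0]) + 1" using weight_upd1 by simp
    then show ?thesis using weight_upd0[OF u a] by simp
  qed
  consider "u!i = u!j" | "u!i = 1" "u!j = 0" | "u!i = 0" "u!j = 1"
    using bin_words_nth[OF u ij(1)] bin_words_nth[OF u ij(2)] by auto
  then show ?thesis
  proof cases
    case 1 then show ?thesis using swap_at_same[of i u j] lu ij by simp
  next
    case 2 then show ?thesis using A[of i j] ij by (simp add: ones_at_def zeros_at_def)
  next
    case 3 then show ?thesis using A[of j i] ij swap_at_commute[of i u j] lu by (simp add: ones_at_def zeros_at_def)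
  qed
qed

definition flip :: "nat list \<Rightarrow> nat list" where
  "flip u = map (\<lambda>b. 1 - b) u"

definition flip_op :: "nat \<Rightarrow> (nat list \<Rightarrow> complex) \<Rightarrow> nat list \<Rightarrow> complex" where
  "flip_op n z = (\<lambda>u. if u \<in> bin_words n then z (flip u) else 0)"

lemma lin_op_flip_op: "lin_op (flip_op n)"
  unfolding lin_op_def flip_op_def by (auto simp: fun_eq_iff)

lemma flip_bin_words: "u \<in> bin_words n \<Longrightarrow> flip u \<in> bin_words n"
  by (auto simp: flip_def bin_words_def)

lemma flip_flip: "u \<in> bin_words n \<Longrightarrow> flip (flip u) = u"
proof -
  assume u: "u \<in> bin_words n"
  have "\<forall>b\<in>set u. 1 - (1 - b) = b" using u by (auto simp: bin_words_def)
  then show ?thesis by (simp add: flip_def map_idI)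
qed

lemma flip_swap_at: "i < length u \<Longrightarrow> j < length u \<Longrightarrow> flip (swap_at i j u) = swap_at i j (flip u)"
  by (rule nth_equalityI) (auto simp: flip_def swap_at_nth)

lemma ones_at_flip: "u \<in> bin_words n \<Longrightarrow> ones_at n (flip u) = zeros_at n u"
  using bin_words_nth[of u n] by (auto simp: ones_at_def zeros_at_def flip_def bin_words_length)

lemma weight_flip: "u \<in> bin_words n \<Longrightarrow> weight (flip u) = n - weight u"
  using weight_ones_at[OF flip_bin_words] ones_at_flip card_zeros_at by metis

lemma delta_op_flip_op: "delta_op n (flip_op n z) = flip_op n (delta_op n z)"
proof (rule ext)
  fix u
  show "delta_op n (flip_op n z) u = flip_op n (delta_op n z) u"
  proof (cases "u \<in> bin_words n")
    case True
    have lu: "length u = n" using True by (simp add: bin_words_length)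
    have cb: "flip u \<in> bin_words n" by (rule flip_bin_words[OF True])
    define c where "c = 1 / (2 * of_nat (n*(n-1)) :: complex)"
    have 1: "delta_op n (flip_op n z) u = flip_op n z u / 2 - c * (\<Sum>i<n. \<Sum>j<n. if i = j then 0 else flip_op n z (swap_at i j u))"
      using True by (simp add: delta_op_def c_def)
    have 2: "(\<Sum>i<n. \<Sum>j<n. if i = j then 0 else flip_op n z (swap_at i j u)) = (\<Sum>i<n. \<Sum>j<n. if i = j then 0 else z (swap_at i j (flip u)))"
      by (intro sum.cong refl) (simp add: flip_op_def swap_at_bin_words[OF True] flip_swap_at lu)
    have 3: "flip_op n (delta_op n z) u = z (flip u) / 2 - c * (\<Sum>i<n. \<Sum>j<n. if i = j then 0 else z (swap_at i j (flip u)))"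
      using True cb by (simp add: delta_op_def flip_op_def c_def)
    have 4: "flip_op n z u = z (flip u)" using True by (simp add: flip_op_def)
    show ?thesis unfolding 1 2 3 4 ..
  qed (simp add: delta_op_def flip_op_def)
qed

section \<open>An annihilating polynomial of \<open>\<triangle>\<close>\<close>

definition weight_supp :: "nat \<Rightarrow> nat \<Rightarrow> (nat list \<Rightarrow> complex) \<Rightarrow> bool" where
  "weight_supp n k z \<longleftrightarrow> (\<forall>u. z u \<noteq> 0 \<longrightarrow> u \<in> bin_words n \<and> weight u = k)"

lemma weight_supp_lower_op_Suc: "weight_supp n (Suc k) z \<Longrightarrow> weight_supp n k (lower_op n z)"
  unfolding weight_supp_def
proof (intro allI impI)
  fix u assume w: "\<forall>u. z u \<noteq> 0 \<longrightarrow> u \<in> bin_words n \<and> weight u = Suc k" and nz: "lower_op n z u \<noteq> 0"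
  then have u: "u \<in> bin_words n" by (simp add: lower_op_def split: if_splits)
  then obtain j where j: "j \<in> zeros_at n u" "z (u[j:=1]) \<noteq> 0" using nz by (auto simp: lower_op_def elim: sum.not_neutral_contains_not_neutral)
  then have "weight (u[j:=1]) = Suc k" using w by blast
  then show "u \<in> bin_words n \<and> weight u = k" using weight_upd1[OF u j(1)] u by simp
qed

lemma lower_op_weight_supp_0: "weight_supp n 0 z \<Longrightarrow> lower_op n z = (\<lambda>u. 0)"
proof (rule ext, rule ccontr)
  fix u assume w: "weight_supp n 0 z" and nz: "lower_op n z u \<noteq> 0"
  then have u: "u \<in> bin_words n" by (simp add: lower_op_def split: if_splits)
  then obtain j where j: "j \<in> zeros_at n u" "z (u[j:=1]) \<noteq> 0" using nz by (auto simp: lower_op_def elim: sum.not_neutral_contains_not_neutral)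
  then have "weight (u[j:=1]) = 0" using w by (auto simp: weight_supp_def)
  then show False using weight_upd1[OF u j(1)] by simp
qed

lemma weight_supp_raise_op: "weight_supp n k z \<Longrightarrow> weight_supp n (Suc k) (raise_op n z)"
  unfolding weight_supp_def
proof (intro allI impI)
  fix u assume w: "\<forall>u. z u \<noteq> 0 \<longrightarrow> u \<in> bin_words n \<and> weight u = k" and nz: "raise_op n z u \<noteq> 0"
  then have u: "u \<in> bin_words n" by (simp add: raise_op_def split: if_splits)
  then obtain i where i: "i \<in> ones_at n u" "z (u[i:=0]) \<noteq> 0" using nz by (auto simp: raise_op_def elim: sum.not_neutral_contains_not_neutral)
  then have "weight (u[i:=0]) = k" using w by blast
  then show "u \<in> bin_words n \<and> weight u = Suc k" using weight_upd0[OF u i(1)] u by simp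
qed

lemma weight_supp_delta_op: "weight_supp n k z \<Longrightarrow> weight_supp n k (delta_op n z)"
  unfolding weight_supp_def
proof (intro allI impI)
  fix u assume w: "\<forall>u. z u \<noteq> 0 \<longrightarrow> u \<in> bin_words n \<and> weight u = k" and nz: "delta_op n z u \<noteq> 0"
  then have u: "u \<in> bin_words n" by (simp add: delta_op_def split: if_splits)
  show "u \<in> bin_words n \<and> weight u = k"
  proof (cases "z u = 0")
    case False then show ?thesis using w by blast
  next
    case True
    then have "(\<Sum>i<n. \<Sum>j<n. if i = j then 0 else z (swap_at i j u)) \<noteq> 0" using nz u by (auto simp: delta_op_def)
    then obtain i where i: "i < n" "(\<Sum>j<n. if i = j then 0 else z (swap_at i j u)) \<noteq> 0"
      by (auto elim: sum.not_neutral_contains_not_neutral)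
    then obtain j where j: "j < n" "(if i = j then 0 else z (swap_at i j u)) \<noteq> 0"
      by (auto elim: sum.not_neutral_contains_not_neutral)
    then have "z (swap_at i j u) \<noteq> 0" by (simp split: if_splits)
    then have "weight (swap_at i j u) = k" using w by blast
    then show ?thesis using weight_swap_at[OF u i(1) j(1)] u by simp
  qed
qed

lemma weight_supp_raise_lower: "weight_supp n k z \<Longrightarrow> weight_supp n k (raise_op n (lower_op n z))"
proof (cases k)
  case 0
  assume "weight_supp n k z"
  then have "lower_op n z = (\<lambda>u. 0)" using 0 lower_op_weight_supp_0 by simp
  then show ?thesis using lin_op_zero[OF lin_op_raise_op] by (simp add: weight_supp_def)
next
  case (Suc k')
  assume "weight_supp n k z"
  then show ?thesis using Suc weight_supp_raise_op weight_supp_lower_op_Suc by simp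
qed

lemma weight_supp_shifted: "weight_supp n k (T z) \<Longrightarrow> weight_supp n k z \<Longrightarrow> weight_supp n k (shifted T c z)"
  unfolding weight_supp_def
proof (intro allI impI)
  fix u assume a: "\<forall>u. T z u \<noteq> 0 \<longrightarrow> u \<in> bin_words n \<and> weight u = k" "\<forall>u. z u \<noteq> 0 \<longrightarrow> u \<in> bin_words n \<and> weight u = k"
    and nz: "shifted T c z u \<noteq> 0"
  then have "T z u \<noteq> 0 \<or> z u \<noteq> 0" by (auto simp: shifted_def)
  then show "u \<in> bin_words n \<and> weight u = k" using a by blast
qed

lemma weight_supp_shifted_prod: "(\<And>z. weight_supp n k z \<Longrightarrow> weight_supp n k (T z)) \<Longrightarrow> weight_supp n k z \<Longrightarrow> weight_supp n k (shifted_prod T cs z)"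
  by (induction cs) (auto intro: weight_supp_shifted)

lemma lower_raise_commutator_weight_supp:
  assumes w: "weight_supp n k z"
  shows "lower_op n (raise_op n z) = (\<lambda>u. raise_op n (lower_op n z) u + (of_nat n - 2 * of_nat k) * z u)"
proof (rule ext)
  fix u
  show "lower_op n (raise_op n z) u = raise_op n (lower_op n z) u + (of_nat n - 2 * of_nat k) * z u"
  proof (cases "u \<in> bin_words n")
    case True
    have "(of_nat n - 2 * of_nat (weight u)) * z u = (of_nat n - 2 * of_nat k) * z u"
      using w by (cases "z u = 0") (auto simp: weight_supp_def)
    then show ?thesis using lower_raise_commutator[OF True] by simp
  next
    case False
    then have "z u = 0" using w by (auto simp: weight_supp_def)
    then show ?thesis using False by (simp add: lower_op_def raise_op_def)
  qed
qed

lemma shifted_prod_raise_op: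
  assumes w: "weight_supp n k w"
  shows "shifted_prod (\<lambda>z. raise_op n (lower_op n z)) (map (\<lambda>c. c + (of_nat n - 2 * of_nat k)) cs) (raise_op n w)
       = raise_op n (shifted_prod (\<lambda>z. raise_op n (lower_op n z)) cs w)"
proof (induction cs)
  case Nil then show ?case by simp
next
  case (Cons c cs)
  let ?UD = "\<lambda>z. raise_op n (lower_op n z)"
  let ?s = "of_nat n - 2 * of_nat k :: complex"
  define p where "p = shifted_prod ?UD cs w"
  have wp: "weight_supp n k p" unfolding p_def by (rule weight_supp_shifted_prod[OF weight_supp_raise_lower w])
  have "shifted_prod ?UD (map (\<lambda>c. c + ?s) (c#cs)) (raise_op n w) = shifted ?UD (c + ?s) (raise_op n p)"
    using Cons.IH by (simp add: p_def)
  also have "\<dots> = (\<lambda>u. raise_op n (lower_op n (raise_op n p)) u - (c + ?s) * raise_op n p u)" by (simp add: shifted_def)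
  also have "raise_op n (lower_op n (raise_op n p)) = raise_op n (\<lambda>u. raise_op n (lower_op n p) u + ?s * p u)"
    by (simp add: lower_raise_commutator_weight_supp[OF wp])
  also have "\<dots> = (\<lambda>u. raise_op n (raise_op n (lower_op n p)) u + ?s * raise_op n p u)"
    using lin_op_add[OF lin_op_raise_op, of n "raise_op n (lower_op n p)" "\<lambda>u. ?s * p u"] lin_op_scale[OF lin_op_raise_op, of n ?s p] by simp
  finally have 1: "shifted_prod ?UD (map (\<lambda>c. c + ?s) (c#cs)) (raise_op n w) = (\<lambda>u. raise_op n (raise_op n (lower_op n p)) u - c * raise_op n p u)"
    by (simp add: algebra_simps)
  have "raise_op n (shifted_prod ?UD (c#cs) w) = raise_op n (\<lambda>u. raise_op n (lower_op n p) u - c * p u)" by (simp add: shifted_def p_def)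
  also have "\<dots> = (\<lambda>u. raise_op n (raise_op n (lower_op n p)) u - c * raise_op n p u)" by (rule lin_op_diff[OF lin_op_raise_op])
  finally show ?case using 1 by simp
qed

definition ud_eigen :: "nat \<Rightarrow> nat \<Rightarrow> nat \<Rightarrow> complex" where
  "ud_eigen n k j = (of_nat k - of_nat j) * (of_nat n + 1 - of_nat k - of_nat j)"

lemma ud_eigen_Suc: "ud_eigen n (Suc k) j = ud_eigen n k j + (of_nat n - 2 * of_nat k)"
  by (simp add: ud_eigen_def algebra_simps)

text \<open>Induction on \<open>k\<close>: \<open>lower_op\<close> lowers the weight, and by the commutator relation \<open>raise_op\<close> passes
  through the product at the cost of shifting every root by \<open>n - 2k\<close>.\<close>
lemma shifted_prod_raise_lower_vanishes:
  "weight_supp n k z \<Longrightarrow> shifted_prod (\<lambda>z. raise_op n (lower_op n z)) (map (ud_eigen n k) [0..<Suc k]) z = (\<lambda>u. 0)"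
proof (induction k arbitrary: z)
  case 0
  have "lower_op n z = (\<lambda>u. 0)" using lower_op_weight_supp_0[OF 0] .
  then show ?case using lin_op_zero[OF lin_op_raise_op] by (simp add: shifted_def ud_eigen_def)
next
  case (Suc k)
  let ?UD = "\<lambda>z. raise_op n (lower_op n z)"
  let ?s = "of_nat n - 2 * of_nat k :: complex"
  have wD: "weight_supp n k (lower_op n z)" by (rule weight_supp_lower_op_Suc[OF Suc.prems])
  have m1: "map (ud_eigen n (Suc k)) [0..<Suc k] = map (\<lambda>c. c + ?s) (map (ud_eigen n k) [0..<Suc k])"
    by (simp add: ud_eigen_Suc)
  have m2: "ud_eigen n (Suc k) (Suc k) = 0" by (simp add: ud_eigen_def)
  have m: "map (ud_eigen n (Suc k)) [0..<Suc (Suc k)] = map (\<lambda>c. c + ?s) (map (ud_eigen n k) [0..<Suc k]) @ [0]"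
    using m1 m2 by simp
  have "shifted_prod ?UD (map (ud_eigen n (Suc k)) [0..<Suc (Suc k)]) z
      = shifted_prod ?UD (map (\<lambda>c. c + ?s) (map (ud_eigen n k) [0..<Suc k])) (shifted ?UD 0 z)"
    unfolding m shifted_prod_append by simp
  also have "shifted ?UD 0 z = raise_op n (lower_op n z)" by (simp add: shifted_def)
  also have "shifted_prod ?UD (map (\<lambda>c. c + ?s) (map (ud_eigen n k) [0..<Suc k])) (raise_op n (lower_op n z))
      = raise_op n (shifted_prod ?UD (map (ud_eigen n k) [0..<Suc k]) (lower_op n z))"
    by (rule shifted_prod_raise_op[OF wD])
  also have "\<dots> = (\<lambda>u. 0)" using Suc.IH[OF wD] lin_op_zero[OF lin_op_raise_op] by simp
  finally show ?case .
qed

lemma raise_lower_eq_delta_op: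
  assumes n: "2 \<le> n" and w: "weight_supp n k Q"
  shows "raise_op n (lower_op n Q) = (\<lambda>u. of_nat k * (of_nat n - of_nat k + 1) * Q u - of_nat (n*(n-1)) * delta_op n Q u)"
proof (rule ext)
  fix u
  have N: "of_nat (n*(n-1)) \<noteq> (0::complex)" using n by simp
  show "raise_op n (lower_op n Q) u = of_nat k * (of_nat n - of_nat k + 1) * Q u - of_nat (n*(n-1)) * delta_op n Q u"
  proof (cases "u \<in> bin_words n")
    case True
    have e: "of_nat (weight u) * (of_nat n - of_nat (weight u) + 1) * Q u = of_nat k * (of_nat n - of_nat k + 1) * Q u"
      using w by (cases "Q u = 0") (auto simp: weight_supp_def)
    have "of_nat (n*(n-1)) * delta_op n Q u = of_nat k * (of_nat n - of_nat k + 1) * Q u - raise_op n (lower_op n Q) u"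
      using delta_op_raise_lower[OF n True, of Q] N e by simp
    then show ?thesis by (simp add: algebra_simps)
  next
    case False
    then have "Q u = 0" using w by (auto simp: weight_supp_def)
    then show ?thesis using False by (simp add: raise_op_def delta_op_def)
  qed
qed

lemma beta_diff_eq:
  assumes n: "2 \<le> n" and j: "j \<le> n"
  shows "beta n (n - j) = of_nat j * (of_nat n - of_nat j + 1) / of_nat (n*(n-1))"
proof -
  have d: "real n * (real n - 1) \<noteq> 0" using n by simp
  have "2 * (real n - real (n - j)) * (2 * real (n - j) + 2) / (4 * real n * (real n - 1))
      = real j * (real n - real j + 1) / (real n * (real n - 1))"
    using j d by (simp add: of_nat_diff field_simps)
  also have "\<dots> = real j * (real n - real j + 1) / real (n * (n - 1))"
    using n by (simp add: of_nat_diff)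
  finally have e: "2 * (real n - real (n - j)) * (2 * real (n - j) + 2) / (4 * real n * (real n - 1))
      = real j * (real n - real j + 1) / real (n * (n - 1))" .
  show ?thesis unfolding beta_def e by simp
qed

lemma beta_self: "beta n n = 0"
  by (simp add: beta_def)

lemma beta_nonzero:
  assumes "2 \<le> n" "m < n"
  shows "beta n m \<noteq> 0"
proof -
  have a: "real n - real m > 0" using assms by simp
  have b: "2 * real m + 2 > 0" by simp
  have c: "real n - 1 > 0" "real n > 0" using assms by simp_all
  have "2 * (real n - real m) * (2 * real m + 2) / (4 * real n * (real n - 1)) > 0"
    using a b c by (intro divide_pos_pos mult_pos_pos) auto
  then have "2 * (real n - real m) * (2 * real m + 2) / (4 * real n * (real n - 1)) \<noteq> 0" by linarith
  then show ?thesis unfolding beta_def of_real_eq_0_iff .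
qed

lemma shifted_raise_lower_eq:
  assumes n: "2 \<le> n" and w: "weight_supp n k Q" and j: "j \<le> n"
  shows "shifted (\<lambda>z. raise_op n (lower_op n z)) (ud_eigen n k j) Q = (\<lambda>u. (- of_nat (n*(n-1))) * shifted (delta_op n) (beta n (n - j)) Q u)"
proof -
  have N: "of_nat (n*(n-1)) \<noteq> (0::complex)" using n by simp
  have "of_nat (n*(n-1)) * beta n (n - j) = of_nat j * (of_nat n - of_nat j + 1)"
    using N by (simp add: beta_diff_eq[OF n j])
  then have b: "of_nat k * (of_nat n - of_nat k + 1) = of_nat (n*(n-1)) * beta n (n - j) + ud_eigen n k j"
    by (simp add: ud_eigen_def algebra_simps)
  have "A = N * B + R \<Longrightarrow> A * q - N * d - R * q = (- N) * (d - B * q)" for A N B R q d :: complex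
    by (simp add: algebra_simps)
  from this[OF b] show ?thesis
    by (simp add: fun_eq_iff shifted_def raise_lower_eq_delta_op[OF n w])
qed

lemma shifted_prod_raise_lower_eq:
  assumes n: "2 \<le> n" and w: "weight_supp n k z" and js: "\<forall>j\<in>set js. j \<le> n"
  shows "shifted_prod (\<lambda>z. raise_op n (lower_op n z)) (map (ud_eigen n k) js) z
       = (\<lambda>u. (- of_nat (n*(n-1))) ^ length js * shifted_prod (delta_op n) (map (\<lambda>j. beta n (n - j)) js) z u)"
  using js
proof (induction js)
  case Nil then show ?case by simp
next
  case (Cons j js)
  let ?UD = "\<lambda>z. raise_op n (lower_op n z)"
  let ?N = "- of_nat (n*(n-1)) :: complex"
  define Q where "Q = shifted_prod (delta_op n) (map (\<lambda>j. beta n (n - j)) js) z"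
  have wQ: "weight_supp n k Q" unfolding Q_def by (rule weight_supp_shifted_prod[OF weight_supp_delta_op w])
  have IH: "shifted_prod ?UD (map (ud_eigen n k) js) z = (\<lambda>u. ?N ^ length js * Q u)"
    using Cons by (simp add: Q_def)
  have "shifted_prod ?UD (map (ud_eigen n k) (j#js)) z = shifted ?UD (ud_eigen n k j) (\<lambda>u. ?N ^ length js * Q u)"
    using IH by simp
  also have "\<dots> = (\<lambda>u. ?N ^ length js * shifted ?UD (ud_eigen n k j) Q u)"
    unfolding shifted_def using lin_op_scale[OF lin_op_raise_lower, of n "?N ^ length js" Q] by (simp add: algebra_simps)
  also have "\<dots> = (\<lambda>u. ?N ^ length (j#js) * shifted (delta_op n) (beta n (n - j)) Q u)"
    using shifted_raise_lower_eq[OF n wQ, of j] Cons.prems by (simp add: mult_ac)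
  finally show ?case by (simp add: Q_def)
qed

lemma rev_upt_eq_map_minus: "k \<le> n \<Longrightarrow> rev [n - k..<Suc n] = map (\<lambda>j. n - j) [0..<Suc k]"
proof (induction k)
  case (Suc k)
  then have "[n - Suc k..<Suc n] = (n - Suc k) # [n - k..<Suc n]"
    by (simp add: upt_conv_Cons Suc_diff_Suc)
  then show ?case using Suc by simp
qed simp

lemma shifted_prod_delta_op_weight_vanishes:
  assumes n: "2 \<le> n" and k: "k \<le> n" and w: "weight_supp n k z"
  shows "shifted_prod (delta_op n) (map (beta n) [n - k..<Suc n]) z = (\<lambda>u. 0)"
proof -
  let ?js = "[0..<Suc k]"
  have "(\<lambda>u. (- of_nat (n*(n-1))) ^ Suc k * shifted_prod (delta_op n) (map (\<lambda>j. beta n (n - j)) ?js) z u) = (\<lambda>u. 0)"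
    using shifted_prod_raise_lower_eq[OF n w, of ?js] shifted_prod_raise_lower_vanishes[OF w] k by simp
  moreover have "(- of_nat (n*(n-1)) :: complex) ^ Suc k \<noteq> 0" using n by simp
  ultimately have "shifted_prod (delta_op n) (map (\<lambda>j. beta n (n - j)) ?js) z = (\<lambda>u. 0)"
    by (simp add: fun_eq_iff)
  moreover have "mset (map (beta n) [n - k..<Suc n]) = mset (map (\<lambda>j. beta n (n - j)) ?js)"
  proof -
    have "map (\<lambda>j. beta n (n - j)) ?js = map (beta n) (rev [n - k..<Suc n])"
      unfolding rev_upt_eq_map_minus[OF k] by simp
    then show ?thesis by (metis mset_rev rev_map)
  qed
  ultimately show ?thesis using shifted_prod_perm[OF lin_op_delta_op] by metis
qed

lemma mset_eH_roots:
  assumes "2 * k \<le> n"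
  shows "mset (n # [(n+1) div 2..<n]) = mset ([(n+1) div 2..<n - k] @ [n - k..<Suc n])"
proof -
  let ?c = "(n+1) div 2"
  have e: "n - k + Suc k = Suc n" and c: "?c \<le> n - k" "?c \<le> n" using assms by auto
  have "[?c..<n - k] @ [n - k..<Suc n] = [?c..<n] @ [n]"
    by (metis upt_add_eq_append[of ?c "n - k" "Suc k", unfolded e, OF c(1)] upt_Suc_append[OF c(2)])
  then show ?thesis by (simp del: mset_upt upt_Suc)
qed

lemma shifted_prod_delta_op_low_weight:
  assumes n: "2 \<le> n" and k: "2 * k \<le> n" and w: "weight_supp n k z"
  shows "shifted_prod (delta_op n) (map (beta n) (n # [(n+1) div 2..<n])) z = (\<lambda>u. 0)"
proof -
  let ?A = "map (beta n) [n - k..<Suc n]"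
  let ?B = "map (beta n) [(n+1) div 2..<n - k]"
  have m: "mset (map (beta n) (n # [(n+1) div 2..<n])) = mset (?B @ ?A)"
    unfolding map_append[symmetric] mset_map mset_eH_roots[OF k] ..
  have "shifted_prod (delta_op n) (map (beta n) (n # [(n+1) div 2..<n])) z = shifted_prod (delta_op n) ?B (shifted_prod (delta_op n) ?A z)"
    by (simp only: shifted_prod_perm[OF lin_op_delta_op m] shifted_prod_append)
  also have "shifted_prod (delta_op n) ?A z = (\<lambda>u. 0)"
    by (rule shifted_prod_delta_op_weight_vanishes[OF n _ w]) (use k in simp)
  also have "shifted_prod (delta_op n) ?B (\<lambda>u. 0) = (\<lambda>u. 0)"
    by (rule shifted_prod_zero[OF lin_op_delta_op])
  finally show ?thesis .
qed

lemma shifted_prod_flip_op: "shifted_prod (delta_op n) cs (flip_op n z) = flip_op n (shifted_prod (delta_op n) cs z)"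
  by (rule shifted_prod_commute_lin_op[of "flip_op n" "delta_op n", symmetric])
    (simp_all add: lin_op_flip_op delta_op_flip_op)

lemma weight_supp_flip_op:
  assumes w: "weight_supp n k z" and k: "k \<le> n"
  shows "weight_supp n (n - k) (flip_op n z)"
  unfolding weight_supp_def
proof (intro allI impI)
  fix u assume nz: "flip_op n z u \<noteq> 0"
  then have u: "u \<in> bin_words n" and z: "z (flip u) \<noteq> 0" by (auto simp: flip_op_def split: if_splits)
  then have "weight (flip u) = k" using w by (auto simp: weight_supp_def)
  then show "u \<in> bin_words n \<and> weight u = n - k" using weight_flip[OF u] weight_le[OF u] u by simp
qed

lemma flip_op_flip_op:
  assumes "bin_supp n z"
  shows "flip_op n (flip_op n z) = z"
proof (rule ext)
  fix u show "flip_op n (flip_op n z) u = z u"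
    using assms flip_bin_words[of u n] flip_flip[of u n] by (auto simp: flip_op_def bin_supp_def)
qed

text \<open>Weights \<open>k > n/2\<close> are reduced to \<open>n - k\<close> by flipping all letters, which commutes with \<open>\<triangle>\<close>.\<close>
lemma shifted_prod_delta_op_weight_supp:
  assumes n: "2 \<le> n" and k: "k \<le> n" and w: "weight_supp n k z"
  shows "shifted_prod (delta_op n) (map (beta n) (n # [(n+1) div 2..<n])) z = (\<lambda>u. 0)"
proof (cases "2 * k \<le> n")
  case True then show ?thesis using shifted_prod_delta_op_low_weight[OF n True w] by simp
next
  case False
  let ?T = "map (beta n) (n # [(n+1) div 2..<n])"
  have w': "weight_supp n (n - k) (flip_op n z)" by (rule weight_supp_flip_op[OF w k])
  have "2 * (n - k) \<le> n" using False by linarith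
  then have 0: "shifted_prod (delta_op n) ?T (flip_op n z) = (\<lambda>u. 0)" by (rule shifted_prod_delta_op_low_weight[OF n _ w'])
  have wp: "weight_supp n k (shifted_prod (delta_op n) ?T z)" by (rule weight_supp_shifted_prod[OF weight_supp_delta_op w])
  then have sp: "bin_supp n (shifted_prod (delta_op n) ?T z)" by (auto simp: weight_supp_def bin_supp_def)
  have "shifted_prod (delta_op n) ?T z = flip_op n (flip_op n (shifted_prod (delta_op n) ?T z))" using flip_op_flip_op[OF sp] by simp
  also have "\<dots> = flip_op n (shifted_prod (delta_op n) ?T (flip_op n z))" by (simp only: shifted_prod_flip_op)
  also have "\<dots> = (\<lambda>u. 0)" unfolding 0 by (simp add: flip_op_def)
  finally show ?thesis .
qed

definition weight_part :: "nat \<Rightarrow> nat \<Rightarrow> (nat list \<Rightarrow> complex) \<Rightarrow> nat list \<Rightarrow> complex" where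
  "weight_part n k z = (\<lambda>u. if u \<in> bin_words n \<and> weight u = k then z u else 0)"

lemma weight_supp_weight_part: "weight_supp n k (weight_part n k z)"
  by (simp add: weight_supp_def weight_part_def)

lemma sum_weight_part:
  assumes "bin_supp n z"
  shows "z = (\<lambda>u. \<Sum>k\<in>{..n}. weight_part n k z u)"
proof (rule ext)
  fix u
  show "z u = (\<Sum>k\<in>{..n}. weight_part n k z u)"
  proof (cases "u \<in> bin_words n")
    case True
    have "(\<Sum>k\<in>{..n}. weight_part n k z u) = (\<Sum>k\<in>{..n}. if weight u = k then z u else 0)"
      using True by (simp add: weight_part_def)
    also have "\<dots> = z u" using weight_le[OF True] by (simp add: sum.delta)
    finally show ?thesis by simp
  next
    case False then show ?thesis using assms by (simp add: weight_part_def bin_supp_def)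
  qed
qed

lemma delta_op_annihilated:
  assumes n: "2 \<le> n" and sp: "bin_supp n z"
  shows "shifted_prod (delta_op n) (map (beta n) (n # [(n+1) div 2..<n])) z = (\<lambda>u. 0)"
proof -
  let ?T = "map (beta n) (n # [(n+1) div 2..<n])"
  have "shifted_prod (delta_op n) ?T z = shifted_prod (delta_op n) ?T (\<lambda>u. \<Sum>k\<in>{..n}. weight_part n k z u)"
    using sum_weight_part[OF sp] by simp
  also have "\<dots> = (\<lambda>u. \<Sum>k\<in>{..n}. shifted_prod (delta_op n) ?T (weight_part n k z) u)"
    by (rule lin_op_sum[OF _ lin_op_shifted_prod[OF lin_op_delta_op]]) simp
  also have "\<dots> = (\<lambda>u. \<Sum>k\<in>{..n}. 0)"
    using shifted_prod_delta_op_weight_supp[OF n _ weight_supp_weight_part] by simp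
  finally show ?thesis by simp
qed

section \<open>The idempotent \<open>e\<close>\<close>

definition eH_factor :: "nat \<Rightarrow> nat \<Rightarrow> nat list \<Rightarrow> complex" where
  "eH_factor n m = tscale (1 / (beta n n - beta n m)) (tadd (deltaH n) (tscale (- beta n m) (tone n)))"

definition eH_factor_op :: "nat \<Rightarrow> nat \<Rightarrow> (nat list \<Rightarrow> complex) \<Rightarrow> nat list \<Rightarrow> complex" where
  "eH_factor_op n m a = (\<lambda>u. (1 / (beta n n - beta n m)) * (delta_op n a u - beta n m * a u))"

lemma eH_eq_foldr: "eH n = foldr (\<lambda>m. tmul n (eH_factor n m)) [(n + 1) div 2..<n] (tone n)"
  by (simp add: eH_def eH_factor_def)

lemma bin_supp_eH_factor_op: "bin_supp n a \<Longrightarrow> bin_supp n (eH_factor_op n m a)"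
  by (simp add: bin_supp_def eH_factor_op_def delta_op_def)

lemma rep_eH_factor: "2 \<le> n \<Longrightarrow> bin_supp n a \<Longrightarrow> rep n (eH_factor n m) a = eH_factor_op n m a"
  unfolding eH_factor_def eH_factor_op_def
  by (simp add: rep_tscale rep_tadd rep_deltaH rep_tone bin_restrict_bin_supp algebra_simps)

lemma rep_eH:
  assumes "1 \<le> n"
  shows "rep n (eH n) z = foldr (eH_factor_op n) [(n + 1) div 2..<n] (bin_restrict n z)"
proof -
  have supp: "bin_supp n (foldr (eH_factor_op n) ms (bin_restrict n z))" for ms
    by (induction ms) (simp_all add: bin_supp_bin_restrict bin_supp_eH_factor_op)
  have "rep n (foldr (\<lambda>m. tmul n (eH_factor n m)) ms (tone n)) z = foldr (eH_factor_op n) ms (bin_restrict n z)"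
    if "ms \<noteq> [] \<Longrightarrow> 2 \<le> n" for ms
    using that
  proof (induction ms)
    case Nil
    show ?case by (simp add: rep_tone)
  next
    case (Cons m ms)
    then have "2 \<le> n" by simp
    with Cons show ?case by (simp add: rep_tmul rep_eH_factor[OF _ supp])
  qed
  moreover have "[(n + 1) div 2..<n] \<noteq> [] \<Longrightarrow> 2 \<le> n" using assms by simp
  ultimately show ?thesis unfolding eH_eq_foldr by blast
qed

lemma foldr_eH_factor_op_eq_shifted_prod:
  "foldr (eH_factor_op n) ms a = (\<lambda>u. (\<Prod>m\<leftarrow>ms. 1 / (beta n n - beta n m)) * shifted_prod (delta_op n) (map (beta n) ms) a u)"
proof (induction ms)
  case (Cons m ms)
  let ?P = "\<Prod>m\<leftarrow>ms. 1 / (beta n n - beta n m)"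
  let ?Q = "shifted_prod (delta_op n) (map (beta n) ms) a"
  have "foldr (eH_factor_op n) (m # ms) a = eH_factor_op n m (\<lambda>u. ?P * ?Q u)" using Cons by simp
  also have "\<dots> = (\<lambda>u. (1 / (beta n n - beta n m)) * (?P * delta_op n ?Q u - beta n m * (?P * ?Q u)))"
    unfolding eH_factor_op_def using lin_op_scale[OF lin_op_delta_op, of n ?P ?Q] by simp
  also have "\<dots> = (\<lambda>u. (1 / (beta n n - beta n m) * ?P) * shifted (delta_op n) (beta n m) ?Q u)"
    by (simp add: shifted_def algebra_simps)
  finally show ?case by simp
qed simp

lemma delta_op_rep_eH:
  assumes n: "2 \<le> n"
  shows "delta_op n (rep n (eH n) z) = (\<lambda>u. 0)"
proof -
  let ?ms = "[(n + 1) div 2..<n]"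
  let ?P = "\<Prod>m\<leftarrow>?ms. 1 / (beta n n - beta n m)"
  let ?Q = "shifted_prod (delta_op n) (map (beta n) ?ms) (bin_restrict n z)"
  have "delta_op n (rep n (eH n) z) = (\<lambda>u. ?P * delta_op n ?Q u)"
    using n lin_op_scale[OF lin_op_delta_op, of n ?P ?Q] by (simp add: rep_eH foldr_eH_factor_op_eq_shifted_prod)
  also have "delta_op n ?Q = shifted_prod (delta_op n) (map (beta n) (n # ?ms)) (bin_restrict n z)"
    by (simp add: shifted_def beta_self)
  also have "\<dots> = (\<lambda>u. 0)"
    by (rule delta_op_annihilated[OF n bin_supp_bin_restrict])
  finally show ?thesis by simp
qed

text \<open>For \<open>n = 1\<close> the product defining \<open>e\<close> is empty, while \<open>delta_op 1\<close> is junk (it divides by \<open>n(n-1) = 0\<close>).\<close>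
lemma rep_eH_fixes_delta_op_kernel:
  assumes "1 \<le> n" "bin_supp n w" "2 \<le> n \<Longrightarrow> delta_op n w = (\<lambda>u. 0)"
  shows "rep n (eH n) w = w"
proof -
  have "foldr (eH_factor_op n) ms w = w" if "\<forall>m\<in>set ms. m < n \<and> 2 \<le> n" for ms
    using that
  proof (induction ms)
    case (Cons m ms)
    then have "beta n m \<noteq> 0" using beta_nonzero by simp
    with Cons show ?case using assms(3) by (simp add: eH_factor_op_def beta_self)
  qed simp
  moreover have "\<forall>m\<in>set [(n + 1) div 2..<n]. m < n \<and> 2 \<le> n" by auto
  ultimately show ?thesis using assms(1,2) by (simp add: rep_eH bin_restrict_bin_supp)
qed

lemma rep_eH_idem: "1 \<le> n \<Longrightarrow> rep n (eH n) (rep n (eH n) z) = rep n (eH n) z"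
  by (rule rep_eH_fixes_delta_op_kernel[OF _ bin_supp_rep delta_op_rep_eH])

definition diag_op :: "nat \<Rightarrow> (nat list \<Rightarrow> complex) \<Rightarrow> (nat list \<Rightarrow> complex) \<Rightarrow> nat list \<Rightarrow> complex" where
  "diag_op n \<rho> z = (\<lambda>u. if u \<in> bin_words n then \<rho> u * z u else 0)"

definition swap_invariant :: "nat \<Rightarrow> (nat list \<Rightarrow> complex) \<Rightarrow> bool" where
  "swap_invariant n \<rho> \<longleftrightarrow> (\<forall>u i j. u \<in> bin_words n \<longrightarrow> i < n \<longrightarrow> j < n \<longrightarrow> \<rho> (swap_at i j u) = \<rho> u)"

lemma delta_op_diag_op:
  assumes "swap_invariant n \<rho>"
  shows "delta_op n (diag_op n \<rho> z) = diag_op n \<rho> (delta_op n z)"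
proof (rule ext)
  fix u
  show "delta_op n (diag_op n \<rho> z) u = diag_op n \<rho> (delta_op n z) u"
  proof (cases "u \<in> bin_words n")
    case True
    let ?c = "1 / (2 * of_nat (n*(n-1))) :: complex"
    have "(\<Sum>i<n. \<Sum>j<n. if i = j then 0 else diag_op n \<rho> z (swap_at i j u))
        = (\<Sum>i<n. \<Sum>j<n. \<rho> u * (if i = j then 0 else z (swap_at i j u)))"
      using assms True by (intro sum.cong refl) (auto simp: diag_op_def swap_at_bin_words swap_invariant_def)
    then have S: "(\<Sum>i<n. \<Sum>j<n. if i = j then 0 else diag_op n \<rho> z (swap_at i j u))
        = \<rho> u * (\<Sum>i<n. \<Sum>j<n. if i = j then 0 else z (swap_at i j u))"
      by (simp add: sum_distrib_left)
    have "delta_op n (diag_op n \<rho> z) u = diag_op n \<rho> z u / 2 - ?c * (\<Sum>i<n. \<Sum>j<n. if i = j then 0 else diag_op n \<rho> z (swap_at i j u))"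
      using True by (simp add: delta_op_def)
    also have "\<dots> = \<rho> u * (z u / 2 - ?c * (\<Sum>i<n. \<Sum>j<n. if i = j then 0 else z (swap_at i j u)))"
      unfolding S using True by (simp add: diag_op_def algebra_simps)
    also have "\<dots> = diag_op n \<rho> (delta_op n z) u"
      using True by (simp add: diag_op_def delta_op_def)
    finally show ?thesis .
  qed (simp add: delta_op_def diag_op_def)
qed

lemma delta_op_swap_invariant:
  assumes "2 \<le> n" "swap_invariant n \<rho>"
  shows "delta_op n (bin_restrict n \<rho>) = (\<lambda>u. 0)"
proof (rule ext)
  fix u
  show "delta_op n (bin_restrict n \<rho>) u = 0"
  proof (cases "u \<in> bin_words n")
    case True
    have "(\<Sum>i<n. \<Sum>j<n. if i = j then 0 else bin_restrict n \<rho> (swap_at i j u)) = (\<Sum>i<n. \<Sum>j<n. if i = j then 0 else \<rho> u)"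
      using True assms(2) by (intro sum.cong refl) (simp add: bin_restrict_def swap_at_bin_words swap_invariant_def)
    also have "\<dots> = (\<Sum>i<n. of_nat (n - 1) * \<rho> u)"
      by (intro sum.cong refl) (simp add: sum_offdiag_const[of "{..<n}"])
    also have "\<dots> = of_nat (n * (n - 1)) * \<rho> u"
      using assms(1) by (simp add: of_nat_diff)
    finally have S: "(\<Sum>i<n. \<Sum>j<n. if i = j then 0 else bin_restrict n \<rho> (swap_at i j u)) = of_nat (n * (n - 1)) * \<rho> u" .
    have "of_nat (n * (n - 1)) \<noteq> (0::complex)" using assms(1) by simp
    then show ?thesis using True unfolding delta_op_def S by (simp add: bin_restrict_def)
  qed (simp add: delta_op_def)
qed

lemma rep_eH_diag_op:
  assumes "1 \<le> n" "swap_invariant n \<rho>"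
  shows "rep n (eH n) (diag_op n \<rho> z) = diag_op n \<rho> (rep n (eH n) z)"
proof -
  have "eH_factor_op n m (diag_op n \<rho> a) = diag_op n \<rho> (eH_factor_op n m a)" for m a
    unfolding eH_factor_op_def delta_op_diag_op[OF assms(2)] by (rule ext) (simp add: diag_op_def algebra_simps)
  then have "foldr (eH_factor_op n) ms (diag_op n \<rho> a) = diag_op n \<rho> (foldr (eH_factor_op n) ms a)" for ms a
    by (induction ms) simp_all
  moreover have "bin_restrict n (diag_op n \<rho> z) = diag_op n \<rho> (bin_restrict n z)"
    by (simp add: bin_restrict_def diag_op_def fun_eq_iff)
  ultimately show ?thesis using assms(1) by (simp add: rep_eH)
qed

section \<open>\<open>Sym\<^sup>n \<complex>[e\<^sub>1]\<close> acts diagonally\<close>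

lemma kron_binary_offdiag:
  "set w \<subseteq> {0,1} \<Longrightarrow> length w = length u \<Longrightarrow> length u = length v \<Longrightarrow> u \<noteq> v \<Longrightarrow> kron w u v = 0"
proof (induction w arbitrary: u v)
  case (Cons a w)
  from Cons.prems obtain b u' c v' where u: "u = b # u'" and v: "v = c # v'"
    by (cases u; cases v) auto
  show ?case
  proof (cases "b = c")
    case True
    then show ?thesis using Cons u v by simp
  next
    case False
    then have "qmat a b c = 0" using Cons.prems(1) by (auto simp: qmat_def)
    then show ?thesis using u v by simp
  qed
qed simp

lemma rep_mat_SymC_offdiag:
  assumes "r \<in> SymC n" "u \<in> bin_words n" "v \<in> bin_words n" "u \<noteq> v"
  shows "rep_mat n r u v = 0"
  unfolding rep_mat_def
proof (rule sum.neutral, rule ballI)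
  fix w assume "w \<in> words n"
  then show "r w * kron w u v = 0"
    using assms kron_binary_offdiag[of w u v] by (auto simp: SymC_def words_def bin_words_def)
qed

lemma rep_SymC:
  assumes r: "r \<in> SymC n"
  shows "rep n r z = diag_op n (\<lambda>u. rep_mat n r u u) z"
proof (rule ext)
  fix u
  show "rep n r z u = diag_op n (\<lambda>u. rep_mat n r u u) z u"
  proof (cases "u \<in> bin_words n")
    case True
    have "(\<Sum>v\<in>bin_words n. rep_mat n r u v * z v) = (\<Sum>v\<in>bin_words n. if u = v then rep_mat n r u u * z u else 0)"
      using rep_mat_SymC_offdiag[OF r True] by (intro sum.cong) auto
    then show ?thesis using True by (simp add: rep_def diag_op_def)
  qed (simp add: rep_def diag_op_def)
qed

lemma swap_invariant_SymC:
  assumes r: "r \<in> SymC n"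
  shows "swap_invariant n (\<lambda>u. rep_mat n r u u)"
  unfolding swap_invariant_def
proof (intro allI impI)
  fix u i j assume u: "u \<in> bin_words n" and i: "i < n" and j: "j < n"
  let ?\<sigma> = "Transposition.transpose i j"
  have \<sigma>: "?\<sigma> permutes {..<n}" using i j by (intro permutes_swap_id) auto
  have lu: "length u = n" using u by (simp add: bin_words_length)
  have "rep_mat n r (swap_at i j u) (swap_at i j u) = (\<Sum>w\<in>words n. r (wperm n ?\<sigma> w) * kron w u u)"
    using rep_mat_wperm[OF \<sigma> lu lu] wperm_transpose[OF lu i j] by simp
  also have "\<dots> = rep_mat n r u u"
    using r \<sigma> by (auto simp: SymC_def rep_mat_def intro!: sum.cong)
  finally show "rep_mat n r (swap_at i j u) (swap_at i j u) = rep_mat n r u u" .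
qed

definition weight_ind :: "nat \<Rightarrow> nat \<Rightarrow> nat list \<Rightarrow> complex" where
  "weight_ind n k = bin_restrict n (\<lambda>v. if weight v = k then 1 else 0)"

lemma rep_eH_weight_ind: "1 \<le> n \<Longrightarrow> rep n (eH n) (weight_ind n k) = weight_ind n k"
  unfolding weight_ind_def
  by (rule rep_eH_fixes_delta_op_kernel[OF _ bin_supp_bin_restrict delta_op_swap_invariant])
    (auto simp: swap_invariant_def weight_swap_at)

section \<open>The map \<open>r \<mapsto> r e\<close>\<close>

lemma eH_in_tcarrier: "eH n \<in> tcarrier n"
proof -
  have "foldr (\<lambda>m. tmul n (eH_factor n m)) ms (tone n) \<in> tcarrier n" for ms
    by (cases ms) (simp_all add: tone_in_tcarrier tmul_in_tcarrier)
  then show ?thesis by (simp only: eH_eq_foldr)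
qed

lemma tmul_eH_idem:
  assumes "1 \<le> n"
  shows "tmul n (eH n) (eH n) = eH n"
  by (rule rep_injective[OF tmul_in_tcarrier eH_in_tcarrier]) (simp add: rep_tmul rep_eH_idem[OF assms])

lemma SymC_commute_eH:
  assumes "1 \<le> n" "r \<in> SymC n"
  shows "tmul n r (eH n) = tmul n (eH n) r"
  by (rule rep_injective[OF tmul_in_tcarrier tmul_in_tcarrier])
    (simp add: rep_tmul rep_SymC[OF assms(2)] rep_eH_diag_op[OF assms(1) swap_invariant_SymC[OF assms(2)]])

lemma tmul_eH_multiplicative:
  assumes "1 \<le> n" "r \<in> SymC n" "s \<in> SymC n"
  shows "tmul n (tmul n r s) (eH n) = tmul n (tmul n r (eH n)) (tmul n s (eH n))"
proof -
  have "tmul n (tmul n r (eH n)) (tmul n s (eH n)) = tmul n r (tmul n (tmul n (eH n) s) (eH n))"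
    by (simp add: tmul_assoc)
  also have "\<dots> = tmul n r (tmul n (tmul n s (eH n)) (eH n))"
    by (simp only: SymC_commute_eH[OF assms(1,3), symmetric])
  also have "\<dots> = tmul n (tmul n r s) (eH n)"
    by (simp add: tmul_assoc tmul_eH_idem[OF assms(1)])
  finally show ?thesis ..
qed

lemma inj_on_tmul_eH:
  assumes n: "1 \<le> n"
  shows "inj_on (\<lambda>r. tmul n r (eH n)) (SymC n)"
proof (rule inj_onI)
  fix r s assume r: "r \<in> SymC n" and s: "s \<in> SymC n" and eq: "tmul n r (eH n) = tmul n s (eH n)"
  have "rep_mat n r u u = rep_mat n s u u" if u: "u \<in> bin_words n" for u
  proof -
    have "rep n r (weight_ind n (weight u)) u = rep n s (weight_ind n (weight u)) u"
      using arg_cong[OF eq, of "\<lambda>x. rep n x (weight_ind n (weight u)) u"] by (simp add: rep_tmul rep_eH_weight_ind[OF n])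
    then show ?thesis using u by (simp add: rep_SymC[OF r] rep_SymC[OF s] diag_op_def weight_ind_def bin_restrict_def)
  qed
  then have "rep n r z = rep n s z" for z
    by (simp add: rep_SymC[OF r] rep_SymC[OF s] diag_op_def fun_eq_iff)
  then show "r = s" using r s by (intro rep_injective[of r n s]) (auto simp: SymC_def)
qed

theorem lemma3p3:
  fixes n :: nat
  assumes "n \<ge> 1"
  shows "bij_betw (\<lambda>r. tmul n r (eH n)) (SymC n) ((\<lambda>r. tmul n r (eH n)) ` SymC n)
    \<and> (\<forall>r\<in>SymC n. \<forall>s\<in>SymC n.
          tmul n (tadd r s) (eH n) = tadd (tmul n r (eH n)) (tmul n s (eH n)))
    \<and> (\<forall>c. \<forall>r\<in>SymC n. tmul n (tscale c r) (eH n) = tscale c (tmul n r (eH n)))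
    \<and> (\<forall>r\<in>SymC n. \<forall>s\<in>SymC n.
          tmul n (tmul n r s) (eH n) = tmul n (tmul n r (eH n)) (tmul n s (eH n)))
    \<and> tmul n (tone n) (eH n) = eH n"
  using inj_on_imp_bij_betw[OF inj_on_tmul_eH[OF assms]] tmul_eH_multiplicative[OF assms]
  by (simp add: tmul_tadd_left tmul_tscale_left tmul_tone_left[OF eH_in_tcarrier])

end
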